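(* Let $U\in U(2)$ and $\epsilon>0$ be fixed. Then for every number of control qubits $n_c$, an approximate decomposition of the $n_c$-controlled gate $C^{n_c}U$ up to error $\epsilon$ can be constructed on $n=n_c+1$ qubits without auxiliary qubits using a number of CNOT gates that is linear in $n$ (i.e., $O(n)$, with the constant depending on $U$ and $\epsilon$ but not on $n$).
   Context: $C^{n_c}U$ denotes the $(n_c+1)$-qubit gate with control qubits $c_1,\dots,c_{n_c}$ and target qubit $t$ that applies $U$ to $t$ when all controls are in state $|1\rangle$ and the identity otherwise. An approximate decomposition up to error $\epsilon$ is a circuit of CNOT and single-qubit gates on these $n_c+1$ qubits such that, for each computational basis state $x$ of the controls, the operator $V_x$ applied to the target satisfies $\|V_x-U\|_{\max}\le\epsilon$ if $x=1\cdots1$ and $\|V_x-I\|_{\max}\le\epsilon$ otherwise, where $\|M\|_{\max}=\max_{i,j}|M_{ij}|$. *)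

theory Defs
  imports Complex_Main "Jordan_Normal_Form.Matrix"
begin

text \<open>Qubits are numbered 0,...,n-1. A computational basis state of n qubits is an
index i < 2^n; qubit k of i is the bit (i div 2^k) mod 2.\<close>

definition bit_of :: "nat \<Rightarrow> nat \<Rightarrow> nat" where
  "bit_of i k = (i div 2 ^ k) mod 2"

definition conj_transpose :: "complex mat \<Rightarrow> complex mat" where
  "conj_transpose A = mat (dim_col A) (dim_row A) (\<lambda>(i, j). cnj (A $$ (j, i)))"

definition unitary2 :: "complex mat \<Rightarrow> bool" where
  "unitary2 U \<longleftrightarrow> U \<in> carrier_mat 2 2 \<and> U * conj_transpose U = 1\<^sub>m 2"

datatype gate = Single nat "complex mat" | CNOT nat nat

fun gate_wf :: "nat \<Rightarrow> gate \<Rightarrow> bool" where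
  "gate_wf n (Single q G) \<longleftrightarrow> q < n \<and> unitary2 G"
| "gate_wf n (CNOT c t) \<longleftrightarrow> c < n \<and> t < n \<and> c \<noteq> t"

fun gate_mat :: "nat \<Rightarrow> gate \<Rightarrow> complex mat" where
  "gate_mat n (Single q G) = mat (2 ^ n) (2 ^ n) (\<lambda>(i, j).
      if (\<forall>k<n. k \<noteq> q \<longrightarrow> bit_of i k = bit_of j k)
      then G $$ (bit_of i q, bit_of j q) else 0)"
| "gate_mat n (CNOT c t) = mat (2 ^ n) (2 ^ n) (\<lambda>(i, j).
      if (\<forall>k<n. bit_of i k = (if k = t \<and> bit_of j c = 1 then 1 - bit_of j k else bit_of j k))
      then 1 else 0)"

text \<open>Circuit = list of gates applied left to right (first gate acts first).\<close>
fun circuit_mat :: "nat \<Rightarrow> gate list \<Rightarrow> complex mat" where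
  "circuit_mat n [] = 1\<^sub>m (2 ^ n)"
| "circuit_mat n (g # gs) = circuit_mat n gs * gate_mat n g"

definition circuit_wf :: "nat \<Rightarrow> gate list \<Rightarrow> bool" where
  "circuit_wf n gs \<longleftrightarrow> (\<forall>g\<in>set gs. gate_wf n g)"

definition is_CNOT :: "gate \<Rightarrow> bool" where
  "is_CNOT g \<longleftrightarrow> (case g of CNOT _ _ \<Rightarrow> True | _ \<Rightarrow> False)"

definition cnot_count :: "gate list \<Rightarrow> nat" where
  "cnot_count gs = length (filter is_CNOT gs)"

text \<open>Multi-controlled gate with controls 0..nc-1 and target nc (n = nc+1 qubits).
Control basis state x < 2^nc, target bit a; full index x + 2^nc * a.
The circuit must leave the controls unchanged, applying V_x to the target.\<close>
definition block :: "nat \<Rightarrow> complex mat \<Rightarrow> nat \<Rightarrow> complex mat" where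
  "block nc W x = mat 2 2 (\<lambda>(a, b). W $$ (x + 2 ^ nc * a, x + 2 ^ nc * b))"

definition max_norm_le :: "complex mat \<Rightarrow> complex mat \<Rightarrow> real \<Rightarrow> bool" where
  "max_norm_le A B e \<longleftrightarrow> (\<forall>a<2. \<forall>b<2. cmod (A $$ (a, b) - B $$ (a, b)) \<le> e)"

definition approx_decomp :: "nat \<Rightarrow> complex mat \<Rightarrow> real \<Rightarrow> gate list \<Rightarrow> bool" where
  "approx_decomp nc U e gs \<longleftrightarrow>
     circuit_wf (nc + 1) gs \<and>
     (let W = circuit_mat (nc + 1) gs in
       (\<forall>x<2 ^ nc. \<forall>y<2 ^ nc. \<forall>a<2. \<forall>b<2. y \<noteq> x \<longrightarrow>
           W $$ (y + 2 ^ nc * a, x + 2 ^ nc * b) = 0) \<and>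
       (\<forall>x<2 ^ nc. max_norm_le (block nc W x)
           (if x = 2 ^ nc - 1 then U else 1\<^sub>m 2) e))"

end

theory Submission
  imports Defs
begin

text \<open>Write \<open>U = e\<^sup>i\<^sup>\<phi> Rz(\<alpha>) G Rz(\<theta>) G\<^sup>\<dagger> Rz(\<beta>)\<close> with a fixed Clifford gate \<open>G\<close> (Euler
  decomposition). Each multi-controlled \<open>Rz(\<gamma>)\<close> costs \<open>O(n)\<close> CNOTs: it equals
  \<open>X Rz(-\<gamma>/4) X Rz(\<gamma>/4) X Rz(-\<gamma>/4) X Rz(\<gamma>/4)\<close> where the \<open>X\<close> gates are multi-controlled
  by the two halves of the controls in turn, and a multi-controlled \<open>X\<close> is a pair of Toffoli
  ladders borrowing the other half as dirty ancillas (Barenco et al.). The uncontrolled \<open>G\<close> and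
  \<open>G\<^sup>\<dagger>\<close> cancel unless all controls are set. The controlled phase \<open>e\<^sup>i\<^sup>\<phi>\<close> is diagonal: a
  multi-controlled \<open>Rz(\<phi>)\<close> on the last control reduces it to a controlled phase \<open>e\<^sup>i\<^sup>\<phi>\<^sup>/\<^sup>2\<close>
  with one control less. Stopping this recursion after \<open>M\<close> steps leaves a phase error of modulus
  at most \<open>|\<phi>| / 2\<^sup>M\<close> on some blocks, so a fixed \<open>M\<close> achieves precision \<open>\<epsilon>\<close> for every
  number of controls, with \<open>(144 + 48 M) n\<close> CNOTs.\<close>

lemma bit_of_eq: "bit_of i k = (if bit i k then 1 else 0)"
  by (simp add: bit_of_def bit_nat_def odd_iff_mod_2_eq_one)

lemma bit_of_eq_iff: "bit_of i k = bit_of j k \<longleftrightarrow> bit i k = bit j k"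
  by (simp add: bit_of_eq)

lemma bit_imp_less_exp: "(i::nat) < 2 ^ n \<Longrightarrow> bit i k \<Longrightarrow> k < n"
  by (metis bit_take_bit_iff take_bit_nat_eq_self_iff)

lemma less_exp_if_bits: "(\<And>k. bit (i::nat) k \<Longrightarrow> k < n) \<Longrightarrow> i < 2 ^ n"
  by (metis bit_eq_iff bit_take_bit_iff take_bit_nat_less_exp)

lemma nat_eq_iff_low_bits:
  "(i::nat) < 2 ^ n \<Longrightarrow> j < 2 ^ n \<Longrightarrow> i = j \<longleftrightarrow> (\<forall>k<n. bit i k = bit j k)"
  by (metis bit_eq_iff bit_imp_less_exp)

lemma flip_bit_less_exp: "(j::nat) < 2 ^ n \<Longrightarrow> t < n \<Longrightarrow> flip_bit t j < 2 ^ n"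
  and set_bit_less_exp: "(j::nat) < 2 ^ n \<Longrightarrow> t < n \<Longrightarrow> set_bit t j < 2 ^ n"
  and unset_bit_less_exp: "(j::nat) < 2 ^ n \<Longrightarrow> unset_bit t j < 2 ^ n"
  by (rule less_exp_if_bits;
      auto simp: bit_flip_bit_iff bit_set_bit_iff bit_unset_bit_iff dest: bit_imp_less_exp)+

lemma unset_bit_set_bit_same [simp]: "unset_bit t (set_bit t (j::nat)) = unset_bit t j"
  and unset_bit_unset_bit_same [simp]: "unset_bit t (unset_bit t (j::nat)) = unset_bit t j"
  by (rule bit_eqI; auto simp: bit_unset_bit_iff bit_set_bit_iff)+

lemma set_bit_unset_bit_same: "bit (j::nat) t \<Longrightarrow> set_bit t (unset_bit t j) = j"
  and unset_bit_eq_self: "\<not> bit (j::nat) t \<Longrightarrow> unset_bit t j = j"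
  by (rule bit_eqI; auto simp: bit_unset_bit_iff bit_set_bit_iff)+

lemma eq_except_bit_cases:
  assumes "t < n" "(j::nat) < 2 ^ n" "l < 2 ^ n" "\<forall>k<n. k \<noteq> t \<longrightarrow> bit l k = bit j k"
  shows "l = unset_bit t j \<or> l = set_bit t j"
  using assms unset_bit_less_exp set_bit_less_exp
  by (cases "bit l t") (auto simp: nat_eq_iff_low_bits bit_set_bit_iff bit_unset_bit_iff)

lemma sum_bit_pair:
  assumes "t < n" "(j::nat) < 2 ^ n"
    and "\<And>l. l < 2 ^ n \<Longrightarrow> g l \<noteq> 0 \<Longrightarrow> \<forall>k<n. k \<noteq> t \<longrightarrow> bit l k = bit j k"
  shows "(\<Sum>l\<in>{0..<2 ^ n}. g l) = g (unset_bit t j) + g (set_bit t j)"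
proof -
  let ?S = "{unset_bit t j, set_bit t j}"
  have "?S \<subseteq> {0..<2 ^ n}"
    using assms(1,2) unset_bit_less_exp set_bit_less_exp by auto
  moreover have "\<forall>l\<in>{0..<2 ^ n} - ?S. g l = 0"
    using assms(3) eq_except_bit_cases[OF assms(1,2)] by (metis DiffE atLeastLessThan_iff insertCI)
  ultimately have "(\<Sum>l\<in>{0..<2 ^ n}. g l) = (\<Sum>l\<in>?S. g l)"
    by (intro sum.mono_neutral_right) auto
  moreover have "unset_bit t j \<noteq> set_bit t j"
    by (metis bit_set_bit_iff bit_unset_bit_iff possible_bit_nat)
  ultimately show ?thesis by simp
qed

definition mat2 :: "complex \<Rightarrow> complex \<Rightarrow> complex \<Rightarrow> complex \<Rightarrow> complex mat" where
  "mat2 a b c d = mat 2 2 (\<lambda>(i, j). if i = 0 then (if j = 0 then a else b) else (if j = 0 then c else d))"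

lemma mat2_carrier [simp]: "mat2 a b c d \<in> carrier_mat 2 2"
  and dim_mat2 [simp]: "dim_row (mat2 a b c d) = 2" "dim_col (mat2 a b c d) = 2"
  by (simp_all add: mat2_def)

lemma index_mat2 [simp]:
  "mat2 a b c d $$ (0, 0) = a" "mat2 a b c d $$ (0, Suc 0) = b"
  "mat2 a b c d $$ (Suc 0, 0) = c" "mat2 a b c d $$ (Suc 0, Suc 0) = d"
  by (simp_all add: mat2_def)

lemma mult_carrier_mat2 [simp]: "A \<in> carrier_mat 2 2 \<Longrightarrow> B \<in> carrier_mat 2 2 \<Longrightarrow> A * B \<in> carrier_mat 2 2"
  by (rule mult_carrier_mat)

lemma mat2_eqI:
  assumes "A \<in> carrier_mat 2 2" "B \<in> carrier_mat 2 2"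
    and "A $$ (0, 0) = B $$ (0, 0)" "A $$ (0, 1) = B $$ (0, 1)"
    and "A $$ (1, 0) = B $$ (1, 0)" "A $$ (1, 1) = B $$ (1, 1)"
  shows "A = B"
  using assms by (intro eq_matI) (auto simp: less_2_cases_iff)

lemma mat2_eta: "A \<in> carrier_mat 2 2 \<Longrightarrow> A = mat2 (A $$ (0, 0)) (A $$ (0, 1)) (A $$ (1, 0)) (A $$ (1, 1))"
  by (rule mat2_eqI) auto

lemma mat2_eq_iff: "mat2 a b c d = mat2 a' b' c' d' \<longleftrightarrow> a = a' \<and> b = b' \<and> c = c' \<and> d = d'"
  by (metis index_mat2 One_nat_def)

lemma index_mult_mat2:
  "A \<in> carrier_mat 2 2 \<Longrightarrow> B \<in> carrier_mat 2 2 \<Longrightarrow> a < 2 \<Longrightarrow> b < 2 \<Longrightarrow>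
   (A * B) $$ (a, b) = A $$ (a, 0) * B $$ (0, b) + A $$ (a, 1) * B $$ (1, b)"
  by (simp add: scalar_prod_def numeral_2_eq_2)

lemma mat2_mult [simp]:
  "mat2 a b c d * mat2 a' b' c' d' =
   mat2 (a * a' + b * c') (a * b' + b * d') (c * a' + d * c') (c * b' + d * d')"
  by (rule mat2_eqI) (simp_all del: index_mult_mat add: index_mult_mat2)

lemma mat2_one [simp]: "mat2 1 0 0 1 = 1\<^sub>m 2"
  by (rule mat2_eqI) auto

lemma mat2_eq_one_iff [simp]: "mat2 a b c d = 1\<^sub>m 2 \<longleftrightarrow> a = 1 \<and> b = 0 \<and> c = 0 \<and> d = 1"
  by (metis mat2_eq_iff mat2_one)

lemma one_mult_mat2 [simp]: "(A :: complex mat) \<in> carrier_mat 2 2 \<Longrightarrow> 1\<^sub>m 2 * A = A"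
  and mult_one_mat2 [simp]: "(A :: complex mat) \<in> carrier_mat 2 2 \<Longrightarrow> A * 1\<^sub>m 2 = A"
  by (simp_all add: left_mult_one_mat right_mult_one_mat)

lemma mult_assoc_mat2:
  "A \<in> carrier_mat 2 2 \<Longrightarrow> B \<in> carrier_mat 2 2 \<Longrightarrow> C \<in> carrier_mat 2 2 \<Longrightarrow> A * B * C = A * (B * C)"
  by (rule assoc_mult_mat) auto

lemma conj_transpose_mat2: "conj_transpose (mat2 a b c d) = mat2 (cnj a) (cnj c) (cnj b) (cnj d)"
  by (rule mat2_eqI) (auto simp: conj_transpose_def)

lemma unitary2_mat2_iff:
  "unitary2 (mat2 a b c d) \<longleftrightarrow>
     a * cnj a + b * cnj b = 1 \<and> a * cnj c + b * cnj d = 0 \<and>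
     c * cnj a + d * cnj b = 0 \<and> c * cnj c + d * cnj d = 1"
  by (simp add: unitary2_def conj_transpose_mat2 mat2_eq_iff)

lemma unitary2_diag_cis: "unitary2 (mat2 (cis x) 0 0 (cis y))"
  by (simp add: unitary2_mat2_iff cis_cnj cis_mult)

text \<open>\<open>ctrl_op n t F\<close> applies to qubit \<open>t\<close> the \<open>2 \<times> 2\<close> matrix \<open>F x\<close>, where \<open>x\<close> is the basis state
  with bit \<open>t\<close> cleared; so the matrix may depend on all other qubits, which are left unchanged.\<close>
definition ctrl_op :: "nat \<Rightarrow> nat \<Rightarrow> (nat \<Rightarrow> complex mat) \<Rightarrow> complex mat" where
  "ctrl_op n t F = mat (2 ^ n) (2 ^ n) (\<lambda>(i, j).
     if \<forall>k<n. k \<noteq> t \<longrightarrow> bit i k = bit j k then F (unset_bit t j) $$ (bit_of i t, bit_of j t) else 0)"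

definition perm_op :: "nat \<Rightarrow> (nat \<Rightarrow> nat) \<Rightarrow> complex mat" where
  "perm_op n f = mat (2 ^ n) (2 ^ n) (\<lambda>(i, j). of_bool (i = f j))"

definition diag_op :: "nat \<Rightarrow> (nat \<Rightarrow> complex) \<Rightarrow> complex mat" where
  "diag_op n f = mat (2 ^ n) (2 ^ n) (\<lambda>(i, j). if i = j then f j else 0)"

lemma gate_mat_carrier [simp]: "gate_mat n gt \<in> carrier_mat (2 ^ n) (2 ^ n)"
  by (cases gt) simp_all

lemma dim_gate_mat [simp]: "dim_row (gate_mat n gt) = 2 ^ n" "dim_col (gate_mat n gt) = 2 ^ n"
  using gate_mat_carrier by (metis carrier_matD)+

lemma dim_ctrl_op [simp]: "dim_row (ctrl_op n t F) = 2 ^ n" "dim_col (ctrl_op n t F) = 2 ^ n"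
  and dim_perm_op [simp]: "dim_row (perm_op n f) = 2 ^ n" "dim_col (perm_op n f) = 2 ^ n"
  and dim_diag_op [simp]: "dim_row (diag_op n g) = 2 ^ n" "dim_col (diag_op n g) = 2 ^ n"
  by (simp_all add: ctrl_op_def perm_op_def diag_op_def)

lemma circuit_mat_carrier [simp]: "circuit_mat n gs \<in> carrier_mat (2 ^ n) (2 ^ n)"
  by (induction gs) auto

lemma circuit_mat_append: "circuit_mat n (xs @ ys) = circuit_mat n ys * circuit_mat n xs"
proof (induction xs)
  case Nil
  then show ?case by (simp add: right_mult_one_mat[of _ "2 ^ n"])
next
  case (Cons x xs)
  then show ?case
    by (simp add: assoc_mult_mat[OF circuit_mat_carrier circuit_mat_carrier gate_mat_carrier])
qed

lemma circuit_mat_single: "circuit_mat n [gt] = gate_mat n gt"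
  using left_mult_one_mat[OF gate_mat_carrier] by simp

lemma circuit_wf_append: "circuit_wf n (xs @ ys) \<longleftrightarrow> circuit_wf n xs \<and> circuit_wf n ys"
  by (auto simp: circuit_wf_def)

lemma cnot_count_append: "cnot_count (xs @ ys) = cnot_count xs + cnot_count ys"
  by (simp add: cnot_count_def)

lemma circuit_wf_Nil [simp]: "circuit_wf n []"
  by (simp add: circuit_wf_def)

lemma cnot_count_Nil [simp]: "cnot_count [] = 0"
  by (simp add: cnot_count_def)

lemma cnot_count_Cons_Single [simp]: "cnot_count (Single q G # gs) = cnot_count gs"
  by (simp add: cnot_count_def is_CNOT_def)

lemma circuit_wf_Cons [simp]: "circuit_wf n (gt # gs) \<longleftrightarrow> gate_wf n gt \<and> circuit_wf n gs"
  by (simp add: circuit_wf_def)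

lemma index_ctrl_op:
  "i < 2 ^ n \<Longrightarrow> j < 2 ^ n \<Longrightarrow> ctrl_op n t F $$ (i, j) =
     (if \<forall>k<n. k \<noteq> t \<longrightarrow> bit i k = bit j k then F (unset_bit t j) $$ (bit_of i t, bit_of j t) else 0)"
  by (simp add: ctrl_op_def)

lemma ctrl_op_mult:
  assumes t: "t < n" and F: "\<And>j. F j \<in> carrier_mat 2 2" and G: "\<And>j. G j \<in> carrier_mat 2 2"
  shows "ctrl_op n t F * ctrl_op n t G = ctrl_op n t (\<lambda>j. F j * G j)"
proof (rule eq_matI)
  fix i j assume "i < dim_row (ctrl_op n t (\<lambda>j. F j * G j))" "j < dim_col (ctrl_op n t (\<lambda>j. F j * G j))"
  then have i: "i < 2 ^ n" and j: "j < 2 ^ n" by auto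
  let ?g = "\<lambda>l. ctrl_op n t F $$ (i, l) * ctrl_op n t G $$ (l, j)"
  let ?agree = "\<lambda>l. \<forall>k<n. k \<noteq> t \<longrightarrow> bit l k = bit j k"
  have "(ctrl_op n t F * ctrl_op n t G) $$ (i, j) = (\<Sum>l\<in>{0..<2 ^ n}. ?g l)"
    using i j by (simp add: scalar_prod_def)
  also have "\<dots> = ?g (unset_bit t j) + ?g (set_bit t j)"
    by (rule sum_bit_pair[OF t j]) (use j in \<open>auto simp: index_ctrl_op split: if_splits\<close>)
  also have "\<dots> = ctrl_op n t (\<lambda>j. F j * G j) $$ (i, j)"
  proof -
    have in_range: "unset_bit t j < 2 ^ n" "set_bit t j < 2 ^ n"
      using t j by (auto simp: unset_bit_less_exp set_bit_less_exp)
    have agree: "?agree (unset_bit t j)" "?agree (set_bit t j)"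
      by (auto simp: bit_unset_bit_iff bit_set_bit_iff)
    have same_agree:
      "(\<forall>k<n. k \<noteq> t \<longrightarrow> bit i k = bit (unset_bit t j) k) \<longleftrightarrow> (\<forall>k<n. k \<noteq> t \<longrightarrow> bit i k = bit j k)"
      "(\<forall>k<n. k \<noteq> t \<longrightarrow> bit i k = bit (set_bit t j) k) \<longleftrightarrow> (\<forall>k<n. k \<noteq> t \<longrightarrow> bit i k = bit j k)"
      by (auto simp: bit_unset_bit_iff bit_set_bit_iff)
    have target_bit: "\<not> bit (unset_bit t j) t" "bit (set_bit t j) t"
      by (simp_all add: bit_unset_bit_iff bit_set_bit_iff)
    show ?thesis
    proof (cases "\<forall>k<n. k \<noteq> t \<longrightarrow> bit i k = bit j k")
      case True
      then show ?thesis
        using i j in_range agree same_agree target_bit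
        by (simp add: index_ctrl_op index_mult_mat2[OF F G] bit_of_eq)
    next
      case False
      then show ?thesis
        using i j in_range by (simp only: index_ctrl_op same_agree if_False) simp
    qed
  qed
  finally show "(ctrl_op n t F * ctrl_op n t G) $$ (i, j) = ctrl_op n t (\<lambda>j. F j * G j) $$ (i, j)" .
qed auto

lemma perm_op_mult:
  assumes "\<And>j. j < 2 ^ n \<Longrightarrow> g j < 2 ^ n"
  shows "perm_op n f * perm_op n g = perm_op n (f \<circ> g)"
proof (rule eq_matI)
  fix i j assume "i < dim_row (perm_op n (f \<circ> g))" "j < dim_col (perm_op n (f \<circ> g))"
  then have i: "i < 2 ^ n" and j: "j < 2 ^ n" by auto
  have "(perm_op n f * perm_op n g) $$ (i, j) = (\<Sum>l\<in>{0..<2 ^ n}. of_bool (i = f l) * of_bool (l = g j))"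
    using i j by (simp add: scalar_prod_def perm_op_def)
  also have "\<dots> = (\<Sum>l\<in>{0..<2 ^ n}. if l = g j then of_bool (i = f l) else 0)"
    by (rule sum.cong) auto
  finally show "(perm_op n f * perm_op n g) $$ (i, j) = perm_op n (f \<circ> g) $$ (i, j)"
    using i j assms[OF j] by (simp add: sum.delta' perm_op_def)
qed auto

lemma perm_op_id: "perm_op n (\<lambda>j. j) = 1\<^sub>m (2 ^ n)"
  by (rule eq_matI) (auto simp: perm_op_def)

lemma diag_op_one: "diag_op n (\<lambda>_. 1) = 1\<^sub>m (2 ^ n)"
  by (rule eq_matI) (auto simp: diag_op_def)

lemma diag_op_mult: "diag_op n f * diag_op n g = diag_op n (\<lambda>j. f j * g j)"
proof (rule eq_matI)
  fix i j assume "i < dim_row (diag_op n (\<lambda>j. f j * g j))" "j < dim_col (diag_op n (\<lambda>j. f j * g j))"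
  then have i: "i < 2 ^ n" and j: "j < 2 ^ n" by auto
  have "(diag_op n f * diag_op n g) $$ (i, j) =
      (\<Sum>l\<in>{0..<2 ^ n}. (if i = l then f l else 0) * (if l = j then g j else 0))"
    using i j by (simp add: scalar_prod_def diag_op_def)
  also have "\<dots> = (\<Sum>l\<in>{0..<2 ^ n}. if l = j then (if i = l then f l * g j else 0) else 0)"
    by (rule sum.cong) auto
  finally show "(diag_op n f * diag_op n g) $$ (i, j) = diag_op n (\<lambda>j. f j * g j) $$ (i, j)"
    using i j by (simp add: sum.delta' diag_op_def)
qed auto

lemma ctrl_op_diag:
  assumes "t < n"
  shows "ctrl_op n t (\<lambda>j. mat2 (p j) 0 0 (q j)) =
         diag_op n (\<lambda>j. if bit j t then q (unset_bit t j) else p (unset_bit t j))"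
proof (rule eq_matI)
  fix i j assume "i < dim_row (diag_op n (\<lambda>j. if bit j t then q (unset_bit t j) else p (unset_bit t j)))"
    "j < dim_col (diag_op n (\<lambda>j. if bit j t then q (unset_bit t j) else p (unset_bit t j)))"
  then have i: "i < 2 ^ n" and j: "j < 2 ^ n" by auto
  have "i = j \<longleftrightarrow> (\<forall>k<n. k \<noteq> t \<longrightarrow> bit i k = bit j k) \<and> bit i t = bit j t"
    using nat_eq_iff_low_bits[OF i j] assms by auto
  then show "ctrl_op n t (\<lambda>j. mat2 (p j) 0 0 (q j)) $$ (i, j) =
    diag_op n (\<lambda>j. if bit j t then q (unset_bit t j) else p (unset_bit t j)) $$ (i, j)"
    using i j by (auto simp: diag_op_def index_ctrl_op mat2_def bit_of_eq)
qed auto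

lemma diag_op_as_ctrl_op:
  assumes "t < n"
  shows "diag_op n f = ctrl_op n t (\<lambda>j. mat2 (f (unset_bit t j)) 0 0 (f (set_bit t j)))"
proof -
  have "(\<lambda>j. if bit j t then f (set_bit t (unset_bit t j)) else f (unset_bit t (unset_bit t j))) = f"
    by (auto simp: set_bit_unset_bit_same unset_bit_eq_self)
  then show ?thesis
    using ctrl_op_diag[OF assms, of "\<lambda>j. f (unset_bit t j)" "\<lambda>j. f (set_bit t j)"] by simp
qed

definition pauli_x :: "complex mat" where
  "pauli_x = mat2 0 1 1 0"

lemma pauli_x_carrier [simp]: "pauli_x \<in> carrier_mat 2 2"
  by (simp add: pauli_x_def)

lemma perm_op_flip_bit:
  assumes "t < n" and "\<And>j. P (unset_bit t j) = P j"
  shows "perm_op n (\<lambda>j. if P j then flip_bit t j else j) = ctrl_op n t (\<lambda>j. if P j then pauli_x else 1\<^sub>m 2)"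
proof (rule eq_matI)
  fix i j assume "i < dim_row (ctrl_op n t (\<lambda>j. if P j then pauli_x else 1\<^sub>m 2))"
    "j < dim_col (ctrl_op n t (\<lambda>j. if P j then pauli_x else 1\<^sub>m 2))"
  then have i: "i < 2 ^ n" and j: "j < 2 ^ n" by auto
  show "perm_op n (\<lambda>j. if P j then flip_bit t j else j) $$ (i, j) =
        ctrl_op n t (\<lambda>j. if P j then pauli_x else 1\<^sub>m 2) $$ (i, j)"
  proof (cases "P j")
    case True
    have "flip_bit t j < 2 ^ n"
      using j assms(1) by (rule flip_bit_less_exp)
    then have "i = flip_bit t j \<longleftrightarrow> (\<forall>k<n. k \<noteq> t \<longrightarrow> bit i k = bit j k) \<and> bit i t \<noteq> bit j t"
      using nat_eq_iff_low_bits[OF i] assms(1) by (auto simp: bit_flip_bit_iff)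
    then show ?thesis
      using True i j assms(2)[of j] by (auto simp: perm_op_def index_ctrl_op pauli_x_def mat2_def bit_of_eq)
  next
    case False
    have "i = j \<longleftrightarrow> (\<forall>k<n. k \<noteq> t \<longrightarrow> bit i k = bit j k) \<and> bit i t = bit j t"
      using nat_eq_iff_low_bits[OF i j] assms(1) by auto
    then show ?thesis
      using False i j assms(2)[of j] by (auto simp: perm_op_def index_ctrl_op mat2_def bit_of_eq simp flip: mat2_one)
  qed
qed auto

declare gate_mat.simps [simp del]

lemma gate_mat_Single: "q < n \<Longrightarrow> gate_mat n (Single q G) = ctrl_op n q (\<lambda>_. G)"
  by (rule eq_matI) (simp_all add: gate_mat.simps ctrl_op_def bit_of_eq_iff)

lemma gate_mat_CNOT:
  assumes "c < n" "t < n" "c \<noteq> t"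
  shows "gate_mat n (CNOT c t) = perm_op n (\<lambda>j. if bit j c then flip_bit t j else j)"
proof (rule eq_matI)
  fix i j assume "i < dim_row (perm_op n (\<lambda>j. if bit j c then flip_bit t j else j))"
    "j < dim_col (perm_op n (\<lambda>j. if bit j c then flip_bit t j else j))"
  then have i: "i < 2 ^ n" and j: "j < 2 ^ n" by auto
  define f where "f = (if bit j c then flip_bit t j else j)"
  have f: "f < 2 ^ n"
    using j assms by (auto simp: flip_bit_less_exp f_def)
  have "bit_of i k = (if k = t \<and> bit_of j c = 1 then 1 - bit_of j k else bit_of j k)
      \<longleftrightarrow> bit i k = bit f k" for k
    by (cases "bit j c"; cases "k = t") (auto simp: f_def bit_of_eq bit_flip_bit_iff)
  then have "gate_mat n (CNOT c t) $$ (i, j) = of_bool (\<forall>k<n. bit i k = bit f k)"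
    using i j by (simp add: gate_mat.simps)
  also have "\<dots> = of_bool (i = f)"
    using nat_eq_iff_low_bits[OF i f] by simp
  finally show "gate_mat n (CNOT c t) $$ (i, j) = perm_op n (\<lambda>j. if bit j c then flip_bit t j else j) $$ (i, j)"
    using i j by (simp add: perm_op_def f_def)
qed (auto simp: gate_mat.simps)

lemma gate_mat_CNOT_ctrl_op:
  "c < n \<Longrightarrow> t < n \<Longrightarrow> c \<noteq> t \<Longrightarrow>
   gate_mat n (CNOT c t) = ctrl_op n t (\<lambda>j. if bit j c then pauli_x else 1\<^sub>m 2)"
  by (simp add: gate_mat_CNOT perm_op_flip_bit bit_unset_bit_iff)

lemma gate_mat_Single_diag_ctrl_op:
  assumes "q < n" "t < n" "q \<noteq> t"
  shows "gate_mat n (Single q (mat2 p 0 0 r)) = ctrl_op n t (\<lambda>j. if bit j q then mat2 r 0 0 r else mat2 p 0 0 p)"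
proof -
  have "gate_mat n (Single q (mat2 p 0 0 r)) = diag_op n (\<lambda>j. if bit j q then r else p)"
    using ctrl_op_diag[OF assms(1), of "\<lambda>_. p" "\<lambda>_. r"] assms(1) by (simp add: gate_mat_Single)
  also have "\<dots> = ctrl_op n t (\<lambda>j. if bit j q then mat2 r 0 0 r else mat2 p 0 0 p)"
    unfolding diag_op_as_ctrl_op[OF assms(2)] using assms(3)
    by (intro arg_cong[where f="ctrl_op n t"] ext) (simp add: bit_unset_bit_iff bit_set_bit_iff)
  finally show ?thesis .
qed

section \<open>The Toffoli gate over Clifford+T\<close>

definition t_gate :: "complex mat" where
  "t_gate = mat2 1 0 0 (cis (pi / 4))"

definition t_adj :: "complex mat" where
  "t_adj = mat2 1 0 0 (cis (- (pi / 4)))"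

definition inv_sqrt2 :: complex where
  "inv_sqrt2 = complex_of_real (1 / sqrt 2)"

definition hadamard :: "complex mat" where
  "hadamard = mat2 inv_sqrt2 inv_sqrt2 inv_sqrt2 (- inv_sqrt2)"

lemma clifford_t_carrier [simp]:
  "t_gate \<in> carrier_mat 2 2" "t_adj \<in> carrier_mat 2 2" "hadamard \<in> carrier_mat 2 2"
  by (simp_all add: t_gate_def t_adj_def hadamard_def)

lemma inv_sqrt2_sq: "inv_sqrt2 * inv_sqrt2 = 1 / 2"
  by (simp add: inv_sqrt2_def flip: of_real_mult)

lemma cnj_inv_sqrt2 [simp]: "cnj inv_sqrt2 = inv_sqrt2"
  by (simp add: inv_sqrt2_def)

lemma unitary2_clifford_t: "unitary2 pauli_x" "unitary2 t_gate" "unitary2 t_adj" "unitary2 hadamard"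
  by (simp_all add: unitary2_mat2_iff pauli_x_def t_gate_def t_adj_def hadamard_def inv_sqrt2_sq cis_cnj cis_mult)

lemma cis_quarter_pi_mult:
  "cis (pi / 4) * cis (pi / 4) = \<i>" "cis (- (pi / 4)) * cis (- (pi / 4)) = - \<i>"
  "cis (pi / 4) * cis (- (pi / 4)) = 1" "cis (- (pi / 4)) * cis (pi / 4) = 1"
  by (simp_all add: cis_mult)

definition toffoli_gates :: "nat \<Rightarrow> nat \<Rightarrow> nat \<Rightarrow> gate list" where
  "toffoli_gates a b c =
     [Single c hadamard] @
     [CNOT b c, Single c t_adj, CNOT a c, Single c t_gate, CNOT b c, Single c t_adj, CNOT a c, Single c t_gate] @
     [Single b t_gate, CNOT a b, Single a t_gate, Single b t_adj, CNOT a b] @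
     [Single c hadamard]"

lemma cnot_count_toffoli_gates: "cnot_count (toffoli_gates a b c) = 6"
  by (simp add: toffoli_gates_def cnot_count_def is_CNOT_def)

lemma circuit_wf_toffoli_gates:
  "a < n \<Longrightarrow> b < n \<Longrightarrow> c < n \<Longrightarrow> a \<noteq> b \<Longrightarrow> a \<noteq> c \<Longrightarrow> b \<noteq> c \<Longrightarrow> circuit_wf n (toffoli_gates a b c)"
  by (auto simp: circuit_wf_def toffoli_gates_def unitary2_clifford_t)

context
  fixes n a b c :: nat
  assumes wires: "a < n" "b < n" "c < n" "a \<noteq> b" "a \<noteq> c" "b \<noteq> c"
begin

lemma toffoli_target_phase:
  "circuit_mat n [CNOT b c, Single c t_adj, CNOT a c, Single c t_gate, CNOT b c, Single c t_adj, CNOT a c, Single c t_gate]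
     = ctrl_op n c (\<lambda>j. if bit j a \<and> bit j b then mat2 (- \<i>) 0 0 \<i> else 1\<^sub>m 2)"
proof -
  have "circuit_mat n [CNOT b c, Single c t_adj, CNOT a c, Single c t_gate, CNOT b c, Single c t_adj, CNOT a c, Single c t_gate]
    = ctrl_op n c (\<lambda>j. t_gate * (if bit j a then pauli_x else 1\<^sub>m 2) * t_adj * (if bit j b then pauli_x else 1\<^sub>m 2)
        * t_gate * (if bit j a then pauli_x else 1\<^sub>m 2) * t_adj * (if bit j b then pauli_x else 1\<^sub>m 2))"
    using wires
    by (simp add: gate_mat_CNOT_ctrl_op gate_mat_Single ctrl_op_mult)
  also have "\<dots> = ctrl_op n c (\<lambda>j. if bit j a \<and> bit j b then mat2 (- \<i>) 0 0 \<i> else 1\<^sub>m 2)"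
    by (intro arg_cong[where f="ctrl_op n c"] ext)
      (auto simp: t_gate_def t_adj_def pauli_x_def cis_quarter_pi_mult mult.assoc)
  finally show ?thesis .
qed

lemma toffoli_control_phase:
  "circuit_mat n [Single b t_gate, CNOT a b, Single a t_gate, Single b t_adj, CNOT a b]
     = ctrl_op n c (\<lambda>j. if bit j a \<and> bit j b then mat2 \<i> 0 0 \<i> else 1\<^sub>m 2)"
proof -
  have t_on_a: "gate_mat n (Single a t_gate) =
      ctrl_op n b (\<lambda>j. if bit j a then mat2 (cis (pi / 4)) 0 0 (cis (pi / 4)) else 1\<^sub>m 2)"
    using wires gate_mat_Single_diag_ctrl_op[of a n b 1 "cis (pi / 4)"] by (simp add: t_gate_def cong: if_cong)
  have "circuit_mat n [Single b t_gate, CNOT a b, Single a t_gate, Single b t_adj, CNOT a b]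
    = ctrl_op n b (\<lambda>j. (if bit j a then pauli_x else 1\<^sub>m 2) * t_adj *
         (if bit j a then mat2 (cis (pi / 4)) 0 0 (cis (pi / 4)) else 1\<^sub>m 2) *
         (if bit j a then pauli_x else 1\<^sub>m 2) * t_gate)"
    using wires
    by (simp add: t_on_a gate_mat_CNOT_ctrl_op gate_mat_Single ctrl_op_mult)
  also have "\<dots> = ctrl_op n b (\<lambda>j. mat2 1 0 0 (if bit j a then \<i> else 1))"
    by (intro arg_cong[where f="ctrl_op n b"] ext)
      (auto simp: t_gate_def t_adj_def pauli_x_def cis_quarter_pi_mult mult.assoc)
  also have "\<dots> = diag_op n (\<lambda>j. if bit j b then (if bit (unset_bit b j) a then \<i> else 1) else 1)"
    using wires by (simp add: ctrl_op_diag)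
  also have "\<dots> = diag_op n (\<lambda>j. if bit j a \<and> bit j b then \<i> else 1)"
    using wires by (intro arg_cong[where f="diag_op n"] ext) (simp add: bit_unset_bit_iff)
  also have "\<dots> = ctrl_op n c (\<lambda>j. if bit j a \<and> bit j b then mat2 \<i> 0 0 \<i> else 1\<^sub>m 2)"
    unfolding diag_op_as_ctrl_op[OF wires(3)] using wires
    by (intro arg_cong[where f="ctrl_op n c"] ext) (simp add: bit_unset_bit_iff bit_set_bit_iff)
  finally show ?thesis .
qed

text \<open>The two networks above combine to a doubly controlled \<open>Z\<close> on \<open>c\<close>, which the
  Hadamard gates turn into a doubly controlled \<open>X\<close>.\<close>
lemma circuit_mat_toffoli_gates:
  "circuit_mat n (toffoli_gates a b c) = perm_op n (\<lambda>j. if bit j a \<and> bit j b then flip_bit c j else j)"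
proof -
  have "circuit_mat n (toffoli_gates a b c) = ctrl_op n c (\<lambda>j. hadamard *
      (if bit j a \<and> bit j b then mat2 \<i> 0 0 \<i> else 1\<^sub>m 2) *
      (if bit j a \<and> bit j b then mat2 (- \<i>) 0 0 \<i> else 1\<^sub>m 2) * hadamard)"
    unfolding toffoli_gates_def circuit_mat_append toffoli_control_phase toffoli_target_phase
    using wires by (simp add: circuit_mat_single gate_mat_Single ctrl_op_mult)
  also have "\<dots> = ctrl_op n c (\<lambda>j. if bit j a \<and> bit j b then pauli_x else 1\<^sub>m 2)"
    by (intro arg_cong[where f="ctrl_op n c"] ext)
      (auto simp: hadamard_def pauli_x_def inv_sqrt2_sq algebra_simps)
  also have "\<dots> = perm_op n (\<lambda>j. if bit j a \<and> bit j b then flip_bit c j else j)"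
    using wires by (intro perm_op_flip_bit[symmetric]) (simp_all add: bit_unset_bit_iff)
  finally show ?thesis .
qed

end

section \<open>Multi-controlled \<open>X\<close> with borrowed ancillas\<close>

text \<open>The Toffoli ladder of Barenco et al.: \<open>cc i\<close> is the \<open>i\<close>-th control and \<open>w i\<close> the \<open>i\<close>-th rung,
  with \<open>w 0 = cc 0\<close>; the Toffoli gate of rung \<open>i\<close> has controls \<open>cc i\<close>, \<open>w (i - 1)\<close> and target \<open>w i\<close>.\<close>
definition rung_gates :: "(nat \<Rightarrow> nat) \<Rightarrow> (nat \<Rightarrow> nat) \<Rightarrow> nat \<Rightarrow> gate list" where
  "rung_gates w cc i = toffoli_gates (cc i) (w (i - 1)) (w i)"

definition rung_perm :: "(nat \<Rightarrow> nat) \<Rightarrow> (nat \<Rightarrow> nat) \<Rightarrow> nat \<Rightarrow> nat \<Rightarrow> nat" where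
  "rung_perm w cc i j = (if bit j (cc i) \<and> bit j (w (i - 1)) then flip_bit (w i) j else j)"

fun ladder :: "(nat \<Rightarrow> nat) \<Rightarrow> (nat \<Rightarrow> nat) \<Rightarrow> nat \<Rightarrow> gate list" where
  "ladder w cc 0 = []"
| "ladder w cc (Suc 0) = rung_gates w cc 1"
| "ladder w cc (Suc (Suc i)) =
     rung_gates w cc (Suc (Suc i)) @ ladder w cc (Suc i) @ rung_gates w cc (Suc (Suc i))"

fun ladder_perm :: "(nat \<Rightarrow> nat) \<Rightarrow> (nat \<Rightarrow> nat) \<Rightarrow> nat \<Rightarrow> nat \<Rightarrow> nat" where
  "ladder_perm w cc 0 = id"
| "ladder_perm w cc (Suc 0) = rung_perm w cc 1"
| "ladder_perm w cc (Suc (Suc i)) =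
     rung_perm w cc (Suc (Suc i)) \<circ> ladder_perm w cc (Suc i) \<circ> rung_perm w cc (Suc (Suc i))"

definition all_set :: "(nat \<Rightarrow> nat) \<Rightarrow> nat \<Rightarrow> nat \<Rightarrow> bool" where
  "all_set cc i j \<longleftrightarrow> (\<forall>l\<le>i. bit j (cc l))"

lemma all_set_0: "all_set cc 0 j \<longleftrightarrow> bit j (cc 0)"
  and all_set_Suc: "all_set cc (Suc i) j \<longleftrightarrow> all_set cc i j \<and> bit j (cc (Suc i))"
  by (auto simp: all_set_def le_Suc_eq)

lemma all_set_cong: "(\<And>l. l \<le> i \<Longrightarrow> bit x (cc l) = bit y (cc l)) \<Longrightarrow> all_set cc i x = all_set cc i y"
  by (simp add: all_set_def)

lemma bit_rung_perm:
  "bit (rung_perm w cc i j) k \<longleftrightarrow> bit j k \<noteq> (k = w i \<and> bit j (cc i) \<and> bit j (w (i - 1)))"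
  by (auto simp: rung_perm_def bit_flip_bit_iff)

lemma cnot_count_ladder: "cnot_count (ladder w cc J) \<le> 12 * J"
  by (induction w cc J rule: ladder.induct)
    (simp_all add: rung_gates_def cnot_count_append cnot_count_toffoli_gates)

locale toffoli_ladder =
  fixes n :: nat and w cc :: "nat \<Rightarrow> nat" and N :: nat
  assumes wire_less: "i \<le> N \<Longrightarrow> w i < n" "i \<le> N \<Longrightarrow> cc i < n"
    and rung_0: "w 0 = cc 0"
    and inj_rungs: "inj_on w {..N}"
    and inj_controls: "inj_on cc {..N}"
    and control_not_rung: "l \<le> N \<Longrightarrow> cc l \<notin> w ` {1..N}"
begin

lemma rung_eq_iff: "i \<le> N \<Longrightarrow> i' \<le> N \<Longrightarrow> w i = w i' \<longleftrightarrow> i = i'"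
  using inj_rungs by (auto dest: inj_onD)

lemma rung_neq_control: "1 \<le> i \<Longrightarrow> i \<le> N \<Longrightarrow> l \<le> N \<Longrightarrow> w i \<noteq> cc l"
  using control_not_rung by force

lemma rung_wires:
  assumes "1 \<le> i" "i \<le> N"
  shows "cc i < n" "w (i - 1) < n" "w i < n" "cc i \<noteq> w (i - 1)" "cc i \<noteq> w i" "w (i - 1) \<noteq> w i"
proof -
  show "cc i < n" "w (i - 1) < n" "w i < n"
    using assms wire_less by auto
  show "cc i \<noteq> w i" "w (i - 1) \<noteq> w i"
    using assms rung_neq_control[of i i] rung_eq_iff[of "i - 1" i] by auto
  show "cc i \<noteq> w (i - 1)"
  proof (cases "i = 1")
    case True
    then show ?thesis
      using assms inj_controls rung_0 by (auto dest: inj_onD)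
  next
    case False
    then have "1 \<le> i - 1" "i - 1 \<le> N"
      using assms by simp_all
    then show ?thesis
      using rung_neq_control[of "i - 1" i] assms(2) by auto
  qed
qed

lemma circuit_mat_rung_gates:
  "1 \<le> i \<Longrightarrow> i \<le> N \<Longrightarrow> circuit_mat n (rung_gates w cc i) = perm_op n (rung_perm w cc i)"
  unfolding rung_gates_def rung_perm_def
  by (subst circuit_mat_toffoli_gates) (use rung_wires in auto)

lemma rung_perm_less: "i \<le> N \<Longrightarrow> j < 2 ^ n \<Longrightarrow> rung_perm w cc i j < 2 ^ n"
  using wire_less by (simp add: rung_perm_def flip_bit_less_exp)

lemma ladder_perm_less: "J \<le> N \<Longrightarrow> j < 2 ^ n \<Longrightarrow> ladder_perm w cc J j < 2 ^ n"
  by (induction J arbitrary: j rule: induct_nat_012) (simp_all add: rung_perm_less)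

lemma circuit_mat_ladder: "J \<le> N \<Longrightarrow> circuit_mat n (ladder w cc J) = perm_op n (ladder_perm w cc J)"
proof (induction J rule: induct_nat_012)
  case 0
  then show ?case by (simp add: perm_op_id)
next
  case 1
  then show ?case by (simp add: circuit_mat_rung_gates)
next
  case (ge2 i)
  then show ?case
    by (simp add: circuit_mat_append circuit_mat_rung_gates perm_op_mult rung_perm_less
        ladder_perm_less comp_def)
qed

lemma circuit_wf_rung_gates: "1 \<le> i \<Longrightarrow> i \<le> N \<Longrightarrow> circuit_wf n (rung_gates w cc i)"
  unfolding rung_gates_def by (rule circuit_wf_toffoli_gates) (use rung_wires in auto)

lemma circuit_wf_ladder: "J \<le> N \<Longrightarrow> circuit_wf n (ladder w cc J)"
  by (induction J rule: induct_nat_012) (simp_all add: circuit_wf_append circuit_wf_rung_gates)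

lemma bit_ladder_perm_Suc_Suc:
  assumes S: "Suc (Suc J) \<le> N"
    and IH_rung: "\<And>x i. 1 \<le> i \<Longrightarrow> i \<le> Suc J \<Longrightarrow>
      bit (ladder_perm w cc (Suc J) x) (w i) = (bit x (w i) \<noteq> all_set cc i x)"
    and IH_other: "\<And>x k. k \<notin> w ` {1..Suc J} \<Longrightarrow> bit (ladder_perm w cc (Suc J) x) k = bit x k"
  shows "1 \<le> i \<Longrightarrow> i \<le> Suc (Suc J) \<Longrightarrow>
      bit (ladder_perm w cc (Suc (Suc J)) j) (w i) = (bit j (w i) \<noteq> all_set cc i j)"
    and "k \<notin> w ` {1..Suc (Suc J)} \<Longrightarrow> bit (ladder_perm w cc (Suc (Suc J)) j) k = bit j k"
proof -
  let ?S = "Suc (Suc J)"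
  let ?r = "rung_perm w cc ?S" and ?P = "ladder_perm w cc (Suc J)"
  have bit_r: "bit (?r x) k = bit x k" if "k \<noteq> w ?S" for x k
    using that by (simp add: bit_rung_perm)
  have new_rung: "w ?S \<notin> w ` {1..Suc J}"
    using rung_eq_iff S by fastforce
  have controls_kept: "bit (?r x) (cc l) = bit x (cc l)" "bit (?P (?r x)) (cc l) = bit x (cc l)"
    if "l \<le> N" for x l
  proof -
    have "cc l \<noteq> w ?S" "cc l \<notin> w ` {1..Suc J}"
      using control_not_rung[OF that] S by auto
    then show "bit (?r x) (cc l) = bit x (cc l)" "bit (?P (?r x)) (cc l) = bit x (cc l)"
      using bit_r IH_other by simp_all
  qed
  have all_set_kept: "all_set cc i (?r x) = all_set cc i x" if "i \<le> N" for x i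
    using that controls_kept(1) by (intro all_set_cong) auto
  show "bit (ladder_perm w cc ?S j) (w i) = (bit j (w i) \<noteq> all_set cc i j)" if i: "1 \<le> i" "i \<le> ?S"
  proof (cases "i = ?S")
    case True
    have "w (Suc J) \<noteq> w ?S"
      using rung_eq_iff S by simp
    then have "bit (?P (?r j)) (w (Suc J)) = (bit j (w (Suc J)) \<noteq> all_set cc (Suc J) j)"
      using IH_rung[of "Suc J" "?r j"] bit_r all_set_kept[of "Suc J"] S by simp
    moreover have "bit (?P (?r j)) (w ?S) = (bit j (w ?S) \<noteq> (bit j (cc ?S) \<and> bit j (w (Suc J))))"
      using IH_other[OF new_rung] by (simp add: bit_rung_perm)
    ultimately show ?thesis
      using True controls_kept(2)[OF S] by (auto simp: bit_rung_perm all_set_Suc)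
  next
    case False
    then have "i \<le> Suc J" "w i \<noteq> w ?S"
      using i rung_eq_iff S by auto
    then show ?thesis
      using i IH_rung[of i "?r j"] bit_r all_set_kept[of i] S by simp
  qed
  show "bit (ladder_perm w cc ?S j) k = bit j k" if "k \<notin> w ` {1..?S}"
  proof -
    have "k \<noteq> w ?S" "k \<notin> w ` {1..Suc J}"
      using that by auto
    then show ?thesis
      using IH_other bit_r by simp
  qed
qed

lemma bit_ladder_perm:
  assumes "J \<le> N"
  shows "(\<forall>i. 1 \<le> i \<and> i \<le> J \<longrightarrow> bit (ladder_perm w cc J j) (w i) = (bit j (w i) \<noteq> all_set cc i j)) \<and>
         (\<forall>k. k \<notin> w ` {1..J} \<longrightarrow> bit (ladder_perm w cc J j) k = bit j k)"
  using assms
proof (induction J arbitrary: j rule: induct_nat_012)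
  case 0
  then show ?case by simp
next
  case 1
  have "all_set cc 1 j \<longleftrightarrow> bit j (cc 1) \<and> bit j (w 0)"
    unfolding One_nat_def all_set_Suc all_set_0 rung_0 by auto
  moreover have "1 \<le> i \<and> i \<le> Suc 0 \<longleftrightarrow> i = 1" for i :: nat
    by auto
  ultimately show ?case
    by (simp add: bit_rung_perm)
next
  case (ge2 J)
  have "Suc J \<le> N"
    using ge2.prems by simp
  then show ?case
    using bit_ladder_perm_Suc_Suc[OF ge2.prems] ge2.IH(2) by blast
qed

lemma all_set_ladder_perm:
  assumes "J \<le> N" "i \<le> N"
  shows "all_set cc i (ladder_perm w cc J j) = all_set cc i j"
proof (rule all_set_cong)
  fix l assume "l \<le> i"
  then have "cc l \<notin> w ` {1..J}"
    using control_not_rung[of l] assms by auto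
  then show "bit (ladder_perm w cc J j) (cc l) = bit j (cc l)"
    using bit_ladder_perm[OF assms(1)] by blast
qed

text \<open>Lemma 7.2 of Barenco et al.: the second ladder undoes the first one on the rungs
  \<open>w 1, \<dots>, w (N - 1)\<close>, whose initial contents therefore do not matter.\<close>
lemma ladder_perm_pair:
  assumes "1 \<le> N"
  shows "ladder_perm w cc (N - 1) \<circ> ladder_perm w cc N = (\<lambda>j. if all_set cc N j then flip_bit (w N) j else j)"
proof (intro ext bit_eqI)
  fix j k
  let ?j = "ladder_perm w cc N j"
  have first: "bit ?j (w i) = (bit j (w i) \<noteq> all_set cc i j)" if "1 \<le> i" "i \<le> N" for i
    using bit_ladder_perm[of N j] that by auto
  show "bit ((ladder_perm w cc (N - 1) \<circ> ladder_perm w cc N) j) k =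
        bit (if all_set cc N j then flip_bit (w N) j else j) k"
  proof (cases "k \<in> w ` {1..N - 1}")
    case True
    then obtain i where i: "1 \<le> i" "i \<le> N - 1" "k = w i"
      by auto
    then have "w i \<noteq> w N"
      using rung_eq_iff assms by auto
    then show ?thesis
      using i bit_ladder_perm[of "N - 1" ?j] first[of i] all_set_ladder_perm[of N i j]
      by (auto simp: bit_flip_bit_iff)
  next
    case False
    then have "bit ((ladder_perm w cc (N - 1) \<circ> ladder_perm w cc N) j) k = bit ?j k"
      using bit_ladder_perm[of "N - 1" ?j] by simp
    moreover have "k \<notin> w ` {1..N}" if "k \<noteq> w N"
    proof
      assume "k \<in> w ` {1..N}"
      then obtain i where "1 \<le> i" "i \<le> N" "k = w i"
        by auto
      then show False
        using False that by (cases "i = N") auto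
    qed
    ultimately show ?thesis
      using bit_ladder_perm[of N j] first[of N] assms by (auto simp: bit_flip_bit_iff)
  qed
qed

end

text \<open>Multi-controlled \<open>X\<close> with controls \<open>cs\<close> and target \<open>t\<close>; the wires \<open>anc\<close> are borrowed: they
  may be in any state, and are restored.\<close>
definition mcx_rungs :: "nat list \<Rightarrow> nat list \<Rightarrow> nat \<Rightarrow> nat list" where
  "mcx_rungs cs anc t = hd cs # take (length cs - 2) anc @ [t]"

definition mcx_gates :: "nat list \<Rightarrow> nat list \<Rightarrow> nat \<Rightarrow> gate list" where
  "mcx_gates cs anc t =
    (if cs = [] then [Single t pauli_x]
     else if length cs = 1 then [CNOT (hd cs) t]
     else ladder (nth (mcx_rungs cs anc t)) (nth cs) (length cs - 1) @
          ladder (nth (mcx_rungs cs anc t)) (nth cs) (length cs - 2))"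

definition mcx_wires_ok :: "nat \<Rightarrow> nat list \<Rightarrow> nat list \<Rightarrow> nat \<Rightarrow> bool" where
  "mcx_wires_ok n cs anc t \<longleftrightarrow>
     distinct (t # cs @ anc) \<and> (\<forall>q\<in>set (t # cs @ anc). q < n) \<and> length cs \<le> length anc + 2"

lemma length_mcx_rungs: "2 \<le> length cs \<Longrightarrow> length cs \<le> length anc + 2 \<Longrightarrow> length (mcx_rungs cs anc t) = length cs"
  by (simp add: mcx_rungs_def)

lemma mcx_rung_in_upper:
  assumes "1 \<le> i" "i < length (mcx_rungs cs anc t)"
  shows "mcx_rungs cs anc t ! i \<in> set (take (length cs - 2) anc @ [t])"
proof -
  have "mcx_rungs cs anc t ! i = (take (length cs - 2) anc @ [t]) ! (i - 1)"
    unfolding mcx_rungs_def using assms(1) by (intro nth_Cons_pos) simp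
  moreover have "i - 1 < length (take (length cs - 2) anc @ [t])"
    using assms by (simp add: mcx_rungs_def)
  ultimately show ?thesis
    by (metis nth_mem)
qed

lemma distinct_mcx_rungs: "distinct (t # cs @ anc) \<Longrightarrow> cs \<noteq> [] \<Longrightarrow> distinct (mcx_rungs cs anc t)"
  by (cases cs) (auto simp: mcx_rungs_def dest: in_set_takeD)

lemma set_mcx_rungs: "cs \<noteq> [] \<Longrightarrow> set (mcx_rungs cs anc t) \<subseteq> set (t # cs @ anc)"
  by (cases cs) (auto simp: mcx_rungs_def dest: in_set_takeD)

lemma mcx_toffoli_ladder:
  assumes ok: "mcx_wires_ok n cs anc t" and two: "2 \<le> length cs"
  shows "toffoli_ladder n (nth (mcx_rungs cs anc t)) (nth cs) (length cs - 1)"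
proof
  let ?ws = "mcx_rungs cs anc t"
  have dist: "distinct (t # cs @ anc)" and less: "\<forall>q\<in>set (t # cs @ anc). q < n"
    and len: "length ?ws = length cs" and nonempty: "cs \<noteq> []"
    using ok two by (auto simp: mcx_wires_ok_def length_mcx_rungs)
  show "?ws ! i < n" if "i \<le> length cs - 1" for i
    using that two len less set_mcx_rungs[OF nonempty] nth_mem[of i ?ws] by fastforce
  show "cs ! i < n" if "i \<le> length cs - 1" for i
    using that two less by auto
  show "?ws ! 0 = cs ! 0"
    using nonempty by (cases cs) (simp_all add: mcx_rungs_def)
  show "inj_on (nth ?ws) {..length cs - 1}"
    using distinct_mcx_rungs[OF dist nonempty] len two by (intro inj_on_nth) auto
  show "inj_on (nth cs) {..length cs - 1}"
    using dist two by (intro inj_on_nth) auto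
  show "cs ! l \<notin> nth ?ws ` {1..length cs - 1}" if "l \<le> length cs - 1" for l
  proof
    assume "cs ! l \<in> nth ?ws ` {1..length cs - 1}"
    then obtain i where "1 \<le> i" "i \<le> length cs - 1" "cs ! l = ?ws ! i"
      by auto
    then have "cs ! l \<in> set (take (length cs - 2) anc @ [t])"
      using mcx_rung_in_upper[of i cs anc t] len two by simp
    moreover have "cs ! l \<in> set cs"
      using that two by simp
    ultimately show False
      using dist by (auto dest: in_set_takeD)
  qed
qed

lemma circuit_mat_mcx_gates_ladders:
  assumes ok: "mcx_wires_ok n cs anc t" and two: "2 \<le> length cs"
  shows "circuit_mat n (mcx_gates cs anc t) = perm_op n (\<lambda>j. if \<forall>c\<in>set cs. bit j c then flip_bit t j else j)"
proof -
  let ?w = "nth (mcx_rungs cs anc t)" and ?N = "length cs - 1"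
  interpret toffoli_ladder n ?w "nth cs" ?N
    by (rule mcx_toffoli_ladder[OF ok two])
  have "length (take (length cs - 2) anc) = length cs - 2" "?N = Suc (length cs - 2)"
    using ok two by (auto simp: mcx_wires_ok_def)
  then have top: "?w ?N = t"
    by (simp add: mcx_rungs_def nth_append)
  have "l \<le> ?N \<longleftrightarrow> l < length cs" for l
    using two by auto
  then have all: "all_set (nth cs) ?N j \<longleftrightarrow> (\<forall>c\<in>set cs. bit j c)" for j
    by (auto simp: all_set_def in_set_conv_nth) (metis nth_mem)
  have "cs \<noteq> []" "length cs \<noteq> 1" "length cs - 2 = ?N - 1"
    using two by auto
  then have "circuit_mat n (mcx_gates cs anc t) =
      perm_op n (ladder_perm ?w (nth cs) (?N - 1)) * perm_op n (ladder_perm ?w (nth cs) ?N)"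
    by (simp add: mcx_gates_def circuit_mat_append circuit_mat_ladder)
  also have "\<dots> = perm_op n (ladder_perm ?w (nth cs) (?N - 1) \<circ> ladder_perm ?w (nth cs) ?N)"
    by (rule perm_op_mult) (simp add: ladder_perm_less)
  also have "\<dots> = perm_op n (\<lambda>j. if all_set (nth cs) ?N j then flip_bit (?w ?N) j else j)"
    using two by (subst ladder_perm_pair) auto
  finally show ?thesis
    unfolding top all .
qed

lemma circuit_mat_mcx_gates:
  assumes ok: "mcx_wires_ok n cs anc t"
  shows "circuit_mat n (mcx_gates cs anc t) = ctrl_op n t (\<lambda>j. if \<forall>c\<in>set cs. bit j c then pauli_x else 1\<^sub>m 2)"
proof -
  have t: "t < n" "t \<notin> set cs" and cs_less: "\<forall>c\<in>set cs. c < n"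
    using ok by (auto simp: mcx_wires_ok_def)
  have "circuit_mat n (mcx_gates cs anc t) = perm_op n (\<lambda>j. if \<forall>c\<in>set cs. bit j c then flip_bit t j else j)"
  proof (cases "2 \<le> length cs")
    case False
    then consider "cs = []" | c where "cs = [c]"
      by (metis One_nat_def length_0_conv length_Suc_conv less_2_cases not_le)
    then show ?thesis
    proof cases
      case 1
      then show ?thesis
        using t perm_op_flip_bit[of t n "\<lambda>_. True"] by (simp add: mcx_gates_def gate_mat_Single)
    next
      case 2
      then show ?thesis
        using t cs_less by (simp add: mcx_gates_def gate_mat_CNOT)
    qed
  qed (rule circuit_mat_mcx_gates_ladders[OF ok])
  also have "\<dots> = ctrl_op n t (\<lambda>j. if \<forall>c\<in>set cs. bit j c then pauli_x else 1\<^sub>m 2)"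
    using t by (intro perm_op_flip_bit) (auto simp: bit_unset_bit_iff)
  finally show ?thesis .
qed

lemma cnot_count_mcx_gates: "cnot_count (mcx_gates cs anc t) \<le> 24 * length cs"
  using cnot_count_ladder[of "nth (mcx_rungs cs anc t)" "nth cs" "length cs - 1"]
    cnot_count_ladder[of "nth (mcx_rungs cs anc t)" "nth cs" "length cs - 2"]
  by (auto simp: mcx_gates_def cnot_count_append cnot_count_def is_CNOT_def)

lemma circuit_wf_mcx_gates:
  assumes ok: "mcx_wires_ok n cs anc t"
  shows "circuit_wf n (mcx_gates cs anc t)"
proof (cases "2 \<le> length cs")
  case True
  interpret toffoli_ladder n "nth (mcx_rungs cs anc t)" "nth cs" "length cs - 1"
    by (rule mcx_toffoli_ladder[OF ok True])
  have "cs \<noteq> []" "length cs \<noteq> 1"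
    using True by auto
  then show ?thesis
    by (simp add: mcx_gates_def circuit_wf_append circuit_wf_ladder)
next
  case False
  then consider "cs = []" | c where "cs = [c]"
    by (metis One_nat_def length_0_conv length_Suc_conv less_2_cases not_le)
  then show ?thesis
    using ok by cases (auto simp: mcx_gates_def mcx_wires_ok_def circuit_wf_def unitary2_clifford_t)
qed

section \<open>Multi-controlled \<open>Z\<close>-rotations\<close>

definition rz :: "real \<Rightarrow> complex mat" where
  "rz \<theta> = mat2 (cis (- (\<theta> / 2))) 0 0 (cis (\<theta> / 2))"

lemma rz_carrier [simp]: "rz \<theta> \<in> carrier_mat 2 2"
  by (simp add: rz_def)

lemma unitary2_rz: "unitary2 (rz \<theta>)"
  by (simp add: rz_def unitary2_diag_cis)

text \<open>The controls are split into two halves, each serving as the borrowed wires of the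
  multi-controlled \<open>X\<close> on the other half.\<close>
definition mcrz_gates :: "nat list \<Rightarrow> nat \<Rightarrow> real \<Rightarrow> gate list" where
  "mcrz_gates cs t \<theta> =
    (let c1 = take (length cs div 2) cs; c2 = drop (length cs div 2) cs in
     [Single t (rz (\<theta> / 4))] @ mcx_gates c2 c1 t @ [Single t (rz (- (\<theta> / 4)))] @ mcx_gates c1 c2 t @
     [Single t (rz (\<theta> / 4))] @ mcx_gates c2 c1 t @ [Single t (rz (- (\<theta> / 4)))] @ mcx_gates c1 c2 t)"

lemma mcx_wires_ok_halves:
  assumes "distinct (t # cs)" "t < n" "\<forall>c\<in>set cs. c < n"
  shows "mcx_wires_ok n (take (length cs div 2) cs) (drop (length cs div 2) cs) t"
    "mcx_wires_ok n (drop (length cs div 2) cs) (take (length cs div 2) cs) t"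
proof -
  let ?c1 = "take (length cs div 2) cs" and ?c2 = "drop (length cs div 2) cs"
  have swap: "distinct (t # xs @ ys) \<Longrightarrow> distinct (t # ys @ xs)" for xs ys
    by (auto simp: distinct_append)
  have "distinct (t # ?c1 @ ?c2)"
    using assms(1) by simp
  then have "distinct (t # ?c2 @ ?c1)"
    by (rule swap)
  moreover have "set ?c1 \<subseteq> set cs" "set ?c2 \<subseteq> set cs"
    by (auto dest: in_set_takeD in_set_dropD)
  ultimately show "mcx_wires_ok n ?c1 ?c2 t" "mcx_wires_ok n ?c2 ?c1 t"
    using assms by (auto simp: mcx_wires_ok_def)
qed

text \<open>Conjugating by \<open>X\<close> inverts a \<open>Z\<close>-rotation.\<close>
lemma rz_quarter_product:
  "(if P then pauli_x else 1\<^sub>m 2) * rz (- (\<theta> / 4)) * (if Q then pauli_x else 1\<^sub>m 2) * rz (\<theta> / 4) *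
   (if P then pauli_x else 1\<^sub>m 2) * rz (- (\<theta> / 4)) * (if Q then pauli_x else 1\<^sub>m 2) * rz (\<theta> / 4) =
   (if P \<and> Q then rz \<theta> else 1\<^sub>m 2)"
  by (cases P; cases Q) (simp_all add: pauli_x_def rz_def mat2_eq_iff cis_mult flip: mat2_one)

lemma circuit_mat_mcrz_gates:
  assumes "distinct (t # cs)" "t < n" "\<forall>c\<in>set cs. c < n"
  shows "circuit_mat n (mcrz_gates cs t \<theta>) = ctrl_op n t (\<lambda>j. if \<forall>c\<in>set cs. bit j c then rz \<theta> else 1\<^sub>m 2)"
proof -
  let ?c1 = "take (length cs div 2) cs" and ?c2 = "drop (length cs div 2) cs"
  define P where "P j = (\<forall>c\<in>set ?c1. bit j c)" for j :: nat
  define Q where "Q j = (\<forall>c\<in>set ?c2. bit j c)" for j :: nat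
  have "set cs = set ?c1 \<union> set ?c2"
    by (metis append_take_drop_id set_append)
  then have PQ: "(\<forall>c\<in>set cs. bit j c) \<longleftrightarrow> P j \<and> Q j" for j
    unfolding P_def Q_def by blast
  have "circuit_mat n (mcrz_gates cs t \<theta>) = ctrl_op n t (\<lambda>j.
      (if P j then pauli_x else 1\<^sub>m 2) * rz (- (\<theta> / 4)) * (if Q j then pauli_x else 1\<^sub>m 2) * rz (\<theta> / 4) *
      (if P j then pauli_x else 1\<^sub>m 2) * rz (- (\<theta> / 4)) * (if Q j then pauli_x else 1\<^sub>m 2) * rz (\<theta> / 4))"
    unfolding mcrz_gates_def Let_def circuit_mat_append P_def Q_def
      circuit_mat_mcx_gates[OF mcx_wires_ok_halves(1)[OF assms]]
      circuit_mat_mcx_gates[OF mcx_wires_ok_halves(2)[OF assms]]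
    using assms(2) by (simp add: circuit_mat_single gate_mat_Single ctrl_op_mult)
  then show ?thesis
    unfolding rz_quarter_product PQ .
qed

lemma cnot_count_mcrz_gates: "cnot_count (mcrz_gates cs t \<theta>) \<le> 48 * length cs"
  using cnot_count_mcx_gates[of "take (length cs div 2) cs" "drop (length cs div 2) cs" t]
    cnot_count_mcx_gates[of "drop (length cs div 2) cs" "take (length cs div 2) cs" t]
  by (simp add: mcrz_gates_def Let_def cnot_count_append)
     linarith

lemma circuit_wf_mcrz_gates:
  assumes "distinct (t # cs)" "t < n" "\<forall>c\<in>set cs. c < n"
  shows "circuit_wf n (mcrz_gates cs t \<theta>)"
  using circuit_wf_mcx_gates[OF mcx_wires_ok_halves(1)[OF assms]]
    circuit_wf_mcx_gates[OF mcx_wires_ok_halves(2)[OF assms]] assms(2)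
  by (simp add: mcrz_gates_def Let_def circuit_wf_append unitary2_rz)

section \<open>Approximate multi-controlled phase\<close>

definition global_phase :: "real \<Rightarrow> complex mat" where
  "global_phase \<theta> = mat2 (cis \<theta>) 0 0 (cis \<theta>)"

lemma global_phase_carrier [simp]: "global_phase \<theta> \<in> carrier_mat 2 2"
  by (simp add: global_phase_def)

lemma unitary2_global_phase: "unitary2 (global_phase \<theta>)"
  by (simp add: global_phase_def unitary2_diag_cis)

text \<open>\<open>mcphase_gates k \<theta> M\<close> is meant to put the phase \<open>e\<^sup>i\<^sup>\<theta>\<close> on the basis states whose qubits
  \<open>0, \<dots>, k - 1\<close> are all set. A multi-controlled \<open>Rz(\<theta>)\<close> on qubit \<open>k - 1\<close> does this up to the
  phase \<open>e\<^sup>i\<^sup>\<theta>\<^sup>/\<^sup>2\<close> on the states whose qubits \<open>0, \<dots>, k - 2\<close> are set, which is treated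
  recursively. The recursion is cut off after \<open>M\<close> levels, leaving the error \<open>phase_error\<close>.\<close>
fun mcphase_gates :: "nat \<Rightarrow> real \<Rightarrow> nat \<Rightarrow> gate list" where
  "mcphase_gates k \<theta> 0 = (if k = 0 then [Single 0 (global_phase \<theta>)] else [])"
| "mcphase_gates 0 \<theta> (Suc M) = [Single 0 (global_phase \<theta>)]"
| "mcphase_gates (Suc k) \<theta> (Suc M) = mcrz_gates [0..<k] k \<theta> @ mcphase_gates k (\<theta> / 2) M"

definition phase_error :: "nat \<Rightarrow> real \<Rightarrow> nat \<Rightarrow> nat \<Rightarrow> complex" where
  "phase_error k \<theta> M j = (if M < k \<and> (\<forall>l<k - M. bit j l) then cis (- (\<theta> / 2 ^ M)) else 1)"

lemma circuit_mat_mcrz_diag: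
  assumes "k < n"
  shows "circuit_mat n (mcrz_gates [0..<k] k \<theta>) =
    diag_op n (\<lambda>j. if \<forall>l<k. bit j l then (if bit j k then cis (\<theta> / 2) else cis (- (\<theta> / 2))) else 1)"
proof -
  have "circuit_mat n (mcrz_gates [0..<k] k \<theta>) =
      ctrl_op n k (\<lambda>j. if \<forall>c\<in>set [0..<k]. bit j c then rz \<theta> else 1\<^sub>m 2)"
    using assms by (simp add: circuit_mat_mcrz_gates)
  also have "\<dots> = ctrl_op n k (\<lambda>j. mat2 (if \<forall>l<k. bit j l then cis (- (\<theta> / 2)) else 1) 0 0
                                  (if \<forall>l<k. bit j l then cis (\<theta> / 2) else 1))"
    by (intro arg_cong[where f="ctrl_op n k"] ext) (auto simp: rz_def)
  also have "\<dots> = diag_op n (\<lambda>j. if bit j k then (if \<forall>l<k. bit (unset_bit k j) l then cis (\<theta> / 2) else 1)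
      else (if \<forall>l<k. bit (unset_bit k j) l then cis (- (\<theta> / 2)) else 1))"
    by (rule ctrl_op_diag[OF assms])
  also have "\<dots> = diag_op n (\<lambda>j. if \<forall>l<k. bit j l then (if bit j k then cis (\<theta> / 2) else cis (- (\<theta> / 2))) else 1)"
    by (intro arg_cong[where f="diag_op n"] ext) (auto simp: bit_unset_bit_iff)
  finally show ?thesis .
qed

lemma gate_mat_global_phase: "0 < n \<Longrightarrow> gate_mat n (Single 0 (global_phase \<theta>)) = diag_op n (\<lambda>_. cis \<theta>)"
  using ctrl_op_diag[of 0 n "\<lambda>_. cis \<theta>" "\<lambda>_. cis \<theta>"] by (simp add: gate_mat_Single global_phase_def)

lemma mcphase_step:
  "(if \<forall>l<k. bit j l then cis (\<theta> / 2) else 1) * phase_error k (\<theta> / 2) M j *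
   (if \<forall>l<k. bit j l then (if bit j k then cis (\<theta> / 2) else cis (- (\<theta> / 2))) else 1) =
   (if \<forall>l<Suc k. bit j l then cis \<theta> else 1) * phase_error (Suc k) \<theta> (Suc M) j"
proof -
  have "(\<forall>l<Suc k. bit j l) \<longleftrightarrow> (\<forall>l<k. bit j l) \<and> bit j k"
    by (auto simp: less_Suc_eq)
  moreover have "\<theta> / 2 / 2 ^ M = \<theta> / 2 ^ Suc M"
    by simp
  ultimately show ?thesis
    unfolding phase_error_def by (auto simp: cis_mult)
qed

lemma circuit_mat_mcphase_gates:
  "0 < n \<Longrightarrow> k \<le> n \<Longrightarrow> circuit_mat n (mcphase_gates k \<theta> M) =
     diag_op n (\<lambda>j. (if \<forall>l<k. bit j l then cis \<theta> else 1) * phase_error k \<theta> M j)"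
proof (induction k \<theta> M rule: mcphase_gates.induct)
  case (1 k \<theta>)
  show ?case
  proof (cases "k = 0")
    case True
    then show ?thesis
      using 1 by (simp add: gate_mat_global_phase phase_error_def)
  next
    case False
    then have "(\<lambda>j. (if \<forall>l<k. bit j l then cis \<theta> else 1) * phase_error k \<theta> 0 j) = (\<lambda>_. 1)"
      by (auto simp: fun_eq_iff phase_error_def cis_mult)
    then show ?thesis
      using False by (simp add: diag_op_one)
  qed
next
  case (2 \<theta> M)
  then show ?case
    by (simp add: gate_mat_global_phase phase_error_def)
next
  case (3 k \<theta> M)
  then show ?case
    by (simp add: circuit_mat_append circuit_mat_mcrz_diag diag_op_mult mcphase_step)
qed

lemma cnot_count_mcphase_gates: "cnot_count (mcphase_gates k \<theta> M) \<le> 48 * k * M"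
proof (induction k \<theta> M rule: mcphase_gates.induct)
  case (3 k \<theta> M)
  have "48 * k + 48 * k * M \<le> 48 * Suc k * Suc M"
    by (simp add: algebra_simps)
  then show ?case
    using 3 cnot_count_mcrz_gates[of "[0..<k]" k \<theta>] by (simp add: cnot_count_append)
qed simp_all

lemma circuit_wf_mcphase_gates: "0 < n \<Longrightarrow> k \<le> n \<Longrightarrow> circuit_wf n (mcphase_gates k \<theta> M)"
  by (induction k \<theta> M rule: mcphase_gates.induct)
    (auto simp: unitary2_global_phase circuit_wf_append intro: circuit_wf_mcrz_gates)

lemma norm_cis_minus_one: "cmod (cis x - 1) \<le> \<bar>x\<bar>"
proof -
  have "(cmod (cis x - 1))\<^sup>2 = 4 * (sin (x / 2))\<^sup>2"
    using cos_double_sin[of "x / 2"] by (simp add: cmod_power2 power2_diff sin_squared_eq)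
  also have "\<dots> \<le> 4 * (x / 2)\<^sup>2"
    using abs_le_square_iff[THEN iffD1, OF abs_sin_x_le_abs_x[of "x / 2"]] by simp
  also have "\<dots> = \<bar>x\<bar>\<^sup>2"
    by (simp add: power2_eq_square)
  finally show ?thesis
    by (rule power2_le_imp_le) simp
qed

lemma norm_phase_error_minus_one: "cmod (phase_error k \<theta> M j - 1) \<le> \<bar>\<theta>\<bar> / 2 ^ M"
  using norm_cis_minus_one[of "- (\<theta> / 2 ^ M)"] by (simp add: phase_error_def)

section \<open>Euler decomposition of a \<open>2 \<times> 2\<close> unitary\<close>

definition y_basis :: "complex mat" where
  "y_basis = mat2 inv_sqrt2 inv_sqrt2 (\<i> * inv_sqrt2) (- \<i> * inv_sqrt2)"

definition y_basis_adj :: "complex mat" where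
  "y_basis_adj = mat2 inv_sqrt2 (- \<i> * inv_sqrt2) inv_sqrt2 (\<i> * inv_sqrt2)"

lemma y_basis_carrier [simp]: "y_basis \<in> carrier_mat 2 2" "y_basis_adj \<in> carrier_mat 2 2"
  by (simp_all add: y_basis_def y_basis_adj_def)

lemma unitary2_y_basis: "unitary2 y_basis" "unitary2 y_basis_adj"
  by (simp_all add: unitary2_mat2_iff y_basis_def y_basis_adj_def inv_sqrt2_sq algebra_simps)

lemma y_basis_mult_adj: "y_basis * y_basis_adj = 1\<^sub>m 2"
  by (simp add: y_basis_def y_basis_adj_def inv_sqrt2_sq algebra_simps flip: mat2_one)

definition rotation :: "real \<Rightarrow> complex mat" where
  "rotation t = mat2 (of_real (cos t)) (of_real (sin t)) (- of_real (sin t)) (of_real (cos t))"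

lemma y_basis_rz_adj: "y_basis * rz (- 2 * t) * y_basis_adj = rotation t"
proof -
  have half: "inv_sqrt2 * (inv_sqrt2 * x) = x / 2" for x
    by (simp add: mult.assoc[symmetric] inv_sqrt2_sq)
  have "y_basis * rz (- 2 * t) * y_basis_adj =
      mat2 ((cis t + cis (- t)) / 2) (- \<i> * (cis t - cis (- t)) / 2)
           (\<i> * (cis t - cis (- t)) / 2) ((cis t + cis (- t)) / 2)"
    by (simp add: y_basis_def y_basis_adj_def rz_def mat2_eq_iff algebra_simps half)
  moreover have "cis t + cis (- t) = 2 * cos t" "cis t - cis (- t) = 2 * \<i> * sin t"
    by (simp_all add: complex_eq_iff)
  ultimately show ?thesis
    by (simp add: rotation_def mat2_eq_iff)
qed

lemma norm_row_eq_one: "z * cnj z + w * cnj w = 1 \<Longrightarrow> (cmod z)\<^sup>2 + (cmod w)\<^sup>2 = 1"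
  by (metis complex_norm_square of_real_add of_real_eq_1_iff)

lemma unitary2_one: "unitary2 (1\<^sub>m 2)"
  using unitary2_mat2_iff[of 1 0 0 1] by simp

lemma cmod_le_one_if_row:
  assumes "z * cnj z + w * cnj w = 1"
  shows "cmod z \<le> 1"
proof -
  have "(cmod z)\<^sup>2 \<le> 1"
    using norm_row_eq_one[OF assms] by (metis le_add_same_cancel1 zero_le_power2)
  then show ?thesis
    by (simp add: abs_square_le_1)
qed

lemma unitary2_index_bound:
  assumes "unitary2 U" "a < 2" "b < 2"
  shows "cmod (U $$ (a, b)) \<le> 1"
proof -
  have "U = mat2 (U $$ (0, 0)) (U $$ (0, 1)) (U $$ (1, 0)) (U $$ (1, 1))"
    by (rule mat2_eta) (use assms(1) in \<open>simp add: unitary2_def\<close>)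
  then have "unitary2 (mat2 (U $$ (0, 0)) (U $$ (0, 1)) (U $$ (1, 0)) (U $$ (1, 1)))"
    using assms(1) by simp
  then have "cmod (U $$ (0, 0)) \<le> 1" "cmod (U $$ (0, 1)) \<le> 1" "cmod (U $$ (1, 0)) \<le> 1" "cmod (U $$ (1, 1)) \<le> 1"
    unfolding unitary2_mat2_iff using cmod_le_one_if_row add.commute by metis+
  then show ?thesis
    using assms(2,3) by (auto simp: less_2_cases_iff)
qed

lemma unitary2_second_row:
  assumes "unitary2 (mat2 a b c d)"
  obtains \<delta> where "cmod \<delta> = 1" "c = - (\<delta> * cnj b)" "d = \<delta> * cnj a"
proof
  let ?\<delta> = "a * d - b * c"
  have row1: "a * cnj a + b * cnj b = 1" and orth: "c * cnj a + d * cnj b = 0"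
    and row2: "c * cnj c + d * cnj d = 1"
    using assms by (simp_all add: unitary2_mat2_iff)
  have "d * (a * cnj a + b * cnj b) - b * (c * cnj a + d * cnj b) = ?\<delta> * cnj a"
    by (simp add: algebra_simps)
  then show d: "d = ?\<delta> * cnj a"
    using row1 orth by simp
  have "c * (a * cnj a + b * cnj b) - a * (c * cnj a + d * cnj b) = - (?\<delta> * cnj b)"
    by (simp add: algebra_simps)
  then show c: "c = - (?\<delta> * cnj b)"
    using row1 orth by simp
  have "?\<delta> * cnj ?\<delta> * (a * cnj a + b * cnj b) = c * cnj c + d * cnj d"
    by (subst (2 3) c, subst (2 3) d) (simp add: algebra_simps)
  then have "?\<delta> * cnj ?\<delta> + 0 * cnj 0 = 1"
    using row1 row2 by simp
  then show "cmod ?\<delta> = 1"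
    by (drule_tac norm_row_eq_one) (simp add: abs_square_eq_1)
qed

lemma global_phase_rz_rotation_rz:
  "global_phase \<phi> * rz \<alpha> * rotation t * rz \<beta> =
   mat2 (of_real (cos t) * (cis \<phi> * cis (- (\<alpha> / 2)) * cis (- (\<beta> / 2))))
        (of_real (sin t) * (cis \<phi> * cis (- (\<alpha> / 2)) * cis (\<beta> / 2)))
        (- (of_real (sin t) * (cis \<phi> * cis (\<alpha> / 2) * cis (- (\<beta> / 2)))))
        (of_real (cos t) * (cis \<phi> * cis (\<alpha> / 2) * cis (\<beta> / 2)))"
  by (simp add: global_phase_def rz_def rotation_def mat2_eq_iff algebra_simps)

lemma cis_mult3: "cis p * cis q * cis r = cis (p + q + r)"
  by (simp add: cis_mult)

text \<open>With \<open>a = cos t \<cdot> e\<^sup>i\<^sup>a\<^sup>l\<close>, \<open>b = sin t \<cdot> e\<^sup>i\<^sup>b\<^sup>e\<close> and \<open>\<delta> = e\<^sup>i\<^sup>g\<^sup>a\<close>, the angles are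
  \<open>\<phi> = ga / 2\<close>, \<open>\<alpha> = ga - al - be\<close> and \<open>\<beta> = be - al\<close>.\<close>
lemma mat2_euler_angles:
  assumes "(cmod a)\<^sup>2 + (cmod b)\<^sup>2 = 1" "cmod \<delta> = 1"
  shows "\<exists>\<phi> \<alpha> t \<beta>. mat2 a b (- (\<delta> * cnj b)) (\<delta> * cnj a) =
           global_phase \<phi> * rz \<alpha> * rotation t * rz \<beta>"
proof -
  define al be ga where "al = Arg a" "be = Arg b" "ga = Arg \<delta>"
  define t where "t = arccos (cmod a)"
  have a: "a = cmod a * cis al" and b: "b = cmod b * cis be" and \<delta>: "\<delta> = cis ga"
    using rcis_cmod_Arg[of a] rcis_cmod_Arg[of b] rcis_cmod_Arg[of \<delta>] assms(2)
    by (simp_all add: rcis_def al_be_ga_def)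
  have "(cmod a)\<^sup>2 \<le> 1"
    using assms(1) by (metis le_add_same_cancel1 zero_le_power2)
  then have "cmod a \<le> 1"
    by (simp add: abs_square_le_1)
  then have cos: "cos t = cmod a" and "sin t = sqrt (1 - (cmod a)\<^sup>2)"
    unfolding t_def by (simp_all add: cos_arccos_abs sin_arccos_abs)
  moreover have "1 - (cmod a)\<^sup>2 = (cmod b)\<^sup>2"
    using assms(1) by simp
  ultimately have sin: "sin t = cmod b"
    by simp
  have "cis (ga / 2) * cis (- ((ga - al - be) / 2)) * cis (- ((be - al) / 2)) = cis al"
    "cis (ga / 2) * cis (- ((ga - al - be) / 2)) * cis ((be - al) / 2) = cis be"
    "cis (ga / 2) * cis ((ga - al - be) / 2) * cis (- ((be - al) / 2)) = cis ga * cis (- be)"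
    "cis (ga / 2) * cis ((ga - al - be) / 2) * cis ((be - al) / 2) = cis ga * cis (- al)"
    unfolding cis_mult3 cis_mult by (rule arg_cong[where f = cis], simp add: field_simps)+
  moreover have "cnj b = cmod b * cis (- be)" "cnj a = cmod a * cis (- al)"
    using arg_cong[OF b, of cnj] arg_cong[OF a, of cnj] by (simp_all add: cis_cnj)
  ultimately have "global_phase (ga / 2) * rz (ga - al - be) * rotation t * rz (be - al) =
      mat2 a b (- (\<delta> * cnj b)) (\<delta> * cnj a)"
    unfolding global_phase_rz_rotation_rz cos sin mat2_eq_iff using a b by (simp add: \<delta> algebra_simps)
  then show ?thesis
    by metis
qed

lemma unitary2_euler_decomposition:
  assumes "unitary2 U"
  obtains \<phi> \<alpha> \<theta> \<beta> where "U = global_phase \<phi> * rz \<alpha> * (y_basis * rz \<theta> * y_basis_adj) * rz \<beta>"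
proof -
  let ?a = "U $$ (0, 0)" and ?b = "U $$ (0, 1)"
  have U: "U = mat2 ?a ?b (U $$ (1, 0)) (U $$ (1, 1))"
    by (rule mat2_eta) (use assms in \<open>simp add: unitary2_def\<close>)
  then obtain \<delta> where \<delta>: "cmod \<delta> = 1" "U $$ (1, 0) = - (\<delta> * cnj ?b)" "U $$ (1, 1) = \<delta> * cnj ?a"
    using unitary2_second_row assms by metis
  have "(cmod ?a)\<^sup>2 + (cmod ?b)\<^sup>2 = 1"
    using assms U by (metis unitary2_mat2_iff norm_row_eq_one)
  then obtain \<phi> \<alpha> t \<beta> where "U = global_phase \<phi> * rz \<alpha> * rotation t * rz \<beta>"
    using mat2_euler_angles[OF _ \<delta>(1)] U \<delta>(2,3) by metis
  then show ?thesis
    using that y_basis_rz_adj by metis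
qed

section \<open>Approximate multi-controlled unitaries\<close>

lemma bit_low_high:
  assumes "(x::nat) < 2 ^ m" "a < 2"
  shows "bit (x + 2 ^ m * a) k \<longleftrightarrow> (if k < m then bit x k else k = m \<and> a = 1)"
proof -
  have bit_a: "bit a i \<longleftrightarrow> i = 0 \<and> a = 1" for i
  proof (cases "a = 0")
    case False
    then have "a = 1"
      using assms(2) by simp
    then show ?thesis
      by (cases i) (simp_all add: bit_Suc bit_0)
  qed simp
  have "\<not> bit x i \<or> \<not> bit (push_bit m a) i" for i
    using bit_imp_less_exp[OF assms(1), of i] by (auto simp: bit_push_bit_iff)
  then have "bit (x + push_bit m a) k \<longleftrightarrow> bit x k \<or> bit (push_bit m a) k"
    by (intro bit_disjunctive_add_iff) blast
  also have "\<dots> \<longleftrightarrow> (if k < m then bit x k else k = m \<and> a = 1)"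
    using bit_imp_less_exp[OF assms(1), of k] by (auto simp: bit_push_bit_iff bit_a)
  finally show ?thesis
    by (simp add: push_bit_eq_mult mult.commute)
qed

lemma low_high_less_exp: "(x::nat) < 2 ^ m \<Longrightarrow> a < 2 \<Longrightarrow> x + 2 ^ m * a < 2 ^ Suc m"
  by (cases "a = 0") (auto simp: less_2_cases_iff)

lemma unset_bit_low_high: "(x::nat) < 2 ^ m \<Longrightarrow> a < 2 \<Longrightarrow> unset_bit m (x + 2 ^ m * a) = x"
  by (rule bit_eqI) (auto simp: bit_unset_bit_iff bit_low_high dest: bit_imp_less_exp)

lemma bit_of_low_high: "(x::nat) < 2 ^ m \<Longrightarrow> a < 2 \<Longrightarrow> bit_of (x + 2 ^ m * a) m = a"
  by (auto simp: bit_of_eq bit_low_high less_2_cases_iff)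

lemma index_ctrl_op_low_high:
  assumes "x < 2 ^ nc" "y < 2 ^ nc" "a < 2" "b < 2"
  shows "ctrl_op (Suc nc) nc F $$ (y + 2 ^ nc * a, x + 2 ^ nc * b) = (if y = x then F x $$ (a, b) else 0)"
proof -
  have agree: "(\<forall>k<Suc nc. k \<noteq> nc \<longrightarrow> bit (y + 2 ^ nc * a) k = bit (x + 2 ^ nc * b) k) \<longleftrightarrow> y = x"
    using assms nat_eq_iff_low_bits[OF assms(2,1)] by (auto simp: bit_low_high less_Suc_eq)
  have idx: "y + 2 ^ nc * a < 2 ^ Suc nc" "x + 2 ^ nc * b < 2 ^ Suc nc"
    using assms low_high_less_exp by auto
  show ?thesis
    unfolding index_ctrl_op[OF idx] agree using assms by (simp add: unset_bit_low_high bit_of_low_high)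
qed

lemma all_bits_iff_eq_mask:
  assumes "(x::nat) < 2 ^ m"
  shows "(\<forall>l<m. bit x l) \<longleftrightarrow> x = 2 ^ m - 1"
proof -
  have "bit ((2::nat) ^ m - 1) l \<longleftrightarrow> l < m" for l
    using bit_mask_iff[where 'a = nat, of m l] by (simp add: mask_eq_exp_minus_1)
  then show ?thesis
    using nat_eq_iff_low_bits[OF assms, of "2 ^ m - 1"] by simp
qed

lemma approx_decomp_ctrl_op:
  assumes "circuit_wf (Suc nc) gs" "circuit_mat (Suc nc) gs = ctrl_op (Suc nc) nc F"
    and "\<And>x. x < 2 ^ nc \<Longrightarrow> max_norm_le (F x) (if x = 2 ^ nc - 1 then U else 1\<^sub>m 2) e"
  shows "approx_decomp nc U e gs"
proof -
  have "max_norm_le (block nc (ctrl_op (Suc nc) nc F) x) V e \<longleftrightarrow> max_norm_le (F x) V e"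
    if "x < 2 ^ nc" for x V
    using that by (simp add: max_norm_le_def block_def index_ctrl_op_low_high)
  then show ?thesis
    using assms by (simp add: approx_decomp_def index_ctrl_op_low_high)
qed

lemma max_norm_le_scalar_phase:
  assumes "unitary2 V" "cmod (r - 1) \<le> e"
  shows "max_norm_le (mat2 r 0 0 r * V) V e"
  unfolding max_norm_le_def
proof (intro allI impI)
  fix a b :: nat assume ab: "a < 2" "b < 2"
  have V: "V \<in> carrier_mat 2 2"
    using assms(1) by (simp add: unitary2_def)
  have "(mat2 r 0 0 r * V) $$ (a, b) - V $$ (a, b) = (r - 1) * V $$ (a, b)"
    using ab by (auto simp: index_mult_mat2[OF mat2_carrier V] less_2_cases_iff algebra_simps)
  then have "cmod ((mat2 r 0 0 r * V) $$ (a, b) - V $$ (a, b)) = cmod (r - 1) * cmod (V $$ (a, b))"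
    by (simp add: norm_mult)
  also have "\<dots> \<le> cmod (r - 1)"
    using unitary2_index_bound[OF assms(1) ab] by (simp add: mult_left_le)
  also have "\<dots> \<le> e"
    by (rule assms(2))
  finally show "cmod ((mat2 r 0 0 r * V) $$ (a, b) - V $$ (a, b)) \<le> e" .
qed

definition mcu_gates :: "nat \<Rightarrow> real \<Rightarrow> real \<Rightarrow> real \<Rightarrow> real \<Rightarrow> nat \<Rightarrow> gate list" where
  "mcu_gates nc \<phi> \<alpha> \<theta> \<beta> M =
     mcrz_gates [0..<nc] nc \<beta> @ [Single nc y_basis_adj] @ mcrz_gates [0..<nc] nc \<theta> @
     [Single nc y_basis] @ mcrz_gates [0..<nc] nc \<alpha> @ mcphase_gates nc \<phi> M"

lemma cnot_count_mcu_gates: "cnot_count (mcu_gates nc \<phi> \<alpha> \<theta> \<beta> M) \<le> (144 + 48 * M) * nc"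
proof -
  have rz: "cnot_count (mcrz_gates [0..<nc] nc \<gamma>) \<le> 48 * nc" for \<gamma>
    using cnot_count_mcrz_gates[of "[0..<nc]" nc \<gamma>] by simp
  have "(144 + 48 * M) * nc = 3 * (48 * nc) + 48 * nc * M"
    by (simp add: algebra_simps)
  then show ?thesis
    unfolding mcu_gates_def cnot_count_append
    using rz[of \<alpha>] rz[of \<beta>] rz[of \<theta>] cnot_count_mcphase_gates[of nc \<phi> M] by simp
qed

lemma circuit_wf_mcu_gates: "circuit_wf (Suc nc) (mcu_gates nc \<phi> \<alpha> \<theta> \<beta> M)"
  by (simp add: mcu_gates_def circuit_wf_append circuit_wf_mcrz_gates circuit_wf_mcphase_gates
      unitary2_y_basis)

lemma diag_op_as_ctrl_op_scalar:
  assumes "t < n" "\<And>j. f (unset_bit t j) = f j" "\<And>j. f (set_bit t j) = f j"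
  shows "diag_op n f = ctrl_op n t (\<lambda>j. mat2 (f j) 0 0 (f j))"
  using diag_op_as_ctrl_op[OF assms(1)] assms(2,3) by simp

lemma mcu_block:
  "mat2 ((if P then cis \<phi> else 1) * e) 0 0 ((if P then cis \<phi> else 1) * e) *
     (if P then rz \<alpha> else 1\<^sub>m 2) * y_basis * (if P then rz \<theta> else 1\<^sub>m 2) * y_basis_adj *
     (if P then rz \<beta> else 1\<^sub>m 2) =
   mat2 e 0 0 e * (if P then global_phase \<phi> * rz \<alpha> * (y_basis * rz \<theta> * y_basis_adj) * rz \<beta> else 1\<^sub>m 2)"
proof (cases P)
  case True
  have "mat2 (cis \<phi> * e) 0 0 (cis \<phi> * e) = mat2 e 0 0 e * global_phase \<phi>"
    by (simp add: global_phase_def mult.commute)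
  then show ?thesis
    using True by (simp add: mult_assoc_mat2)
qed (simp add: mult_assoc_mat2 y_basis_mult_adj)

lemma circuit_mat_mcu_gates:
  "circuit_mat (Suc nc) (mcu_gates nc \<phi> \<alpha> \<theta> \<beta> M) = ctrl_op (Suc nc) nc (\<lambda>j.
     mat2 (phase_error nc \<phi> M j) 0 0 (phase_error nc \<phi> M j) *
     (if \<forall>l<nc. bit j l then global_phase \<phi> * rz \<alpha> * (y_basis * rz \<theta> * y_basis_adj) * rz \<beta> else 1\<^sub>m 2))"
proof -
  let ?P = "\<lambda>j. \<forall>l<nc. bit j l"
  let ?p = "\<lambda>j. (if ?P j then cis \<phi> else 1) * phase_error nc \<phi> M j"
  have low_bits: "(\<forall>l<k. bit (unset_bit nc j) l) \<longleftrightarrow> (\<forall>l<k. bit j l)"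
    "(\<forall>l<k. bit (set_bit nc j) l) \<longleftrightarrow> (\<forall>l<k. bit j l)" if "k \<le> nc" for k j
    using that by (auto simp: bit_unset_bit_iff bit_set_bit_iff)
  have phase: "circuit_mat (Suc nc) (mcphase_gates nc \<phi> M) = ctrl_op (Suc nc) nc (\<lambda>j. mat2 (?p j) 0 0 (?p j))"
    unfolding circuit_mat_mcphase_gates[OF zero_less_Suc le_SucI[OF order_refl]]
    by (rule diag_op_as_ctrl_op_scalar) (simp_all add: phase_error_def low_bits)
  have rz: "circuit_mat (Suc nc) (mcrz_gates [0..<nc] nc \<gamma>) = ctrl_op (Suc nc) nc (\<lambda>j. if ?P j then rz \<gamma> else 1\<^sub>m 2)"
    for \<gamma>
  proof -
    have "circuit_mat (Suc nc) (mcrz_gates [0..<nc] nc \<gamma>) =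
        ctrl_op (Suc nc) nc (\<lambda>j. if \<forall>c\<in>set [0..<nc]. bit j c then rz \<gamma> else 1\<^sub>m 2)"
      by (simp add: circuit_mat_mcrz_gates)
    also have "\<dots> = ctrl_op (Suc nc) nc (\<lambda>j. if ?P j then rz \<gamma> else 1\<^sub>m 2)"
      by (intro arg_cong[where f = "ctrl_op (Suc nc) nc"] ext) auto
    finally show ?thesis .
  qed
  have "circuit_mat (Suc nc) (mcu_gates nc \<phi> \<alpha> \<theta> \<beta> M) = ctrl_op (Suc nc) nc (\<lambda>j.
      mat2 (?p j) 0 0 (?p j) * (if ?P j then rz \<alpha> else 1\<^sub>m 2) * y_basis *
      (if ?P j then rz \<theta> else 1\<^sub>m 2) * y_basis_adj * (if ?P j then rz \<beta> else 1\<^sub>m 2))"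
    by (simp add: mcu_gates_def circuit_mat_append phase rz circuit_mat_single gate_mat_Single ctrl_op_mult)
  also have "\<dots> = ctrl_op (Suc nc) nc (\<lambda>j.
     mat2 (phase_error nc \<phi> M j) 0 0 (phase_error nc \<phi> M j) *
     (if ?P j then global_phase \<phi> * rz \<alpha> * (y_basis * rz \<theta> * y_basis_adj) * rz \<beta> else 1\<^sub>m 2))"
    unfolding mcu_block ..
  finally show ?thesis .
qed

lemma approx_decomp_mcu_gates:
  assumes "unitary2 U" "U = global_phase \<phi> * rz \<alpha> * (y_basis * rz \<theta> * y_basis_adj) * rz \<beta>"
    and "\<bar>\<phi>\<bar> / 2 ^ M \<le> e"
  shows "approx_decomp nc U e (mcu_gates nc \<phi> \<alpha> \<theta> \<beta> M)"
proof (rule approx_decomp_ctrl_op[OF circuit_wf_mcu_gates circuit_mat_mcu_gates])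
  fix x :: nat assume x: "x < 2 ^ nc"
  have err: "cmod (phase_error nc \<phi> M x - 1) \<le> e"
    using norm_phase_error_minus_one assms(3) order_trans by blast
  have "(if \<forall>l<nc. bit x l then global_phase \<phi> * rz \<alpha> * (y_basis * rz \<theta> * y_basis_adj) * rz \<beta> else 1\<^sub>m 2) =
      (if x = 2 ^ nc - 1 then U else 1\<^sub>m 2)"
    unfolding all_bits_iff_eq_mask[OF x] assms(2) ..
  moreover have "max_norm_le (mat2 (phase_error nc \<phi> M x) 0 0 (phase_error nc \<phi> M x) * V) V e"
    if "V = U \<or> V = 1\<^sub>m 2" for V
    using that max_norm_le_scalar_phase[OF _ err] assms(1) unitary2_one by blast
  ultimately show "max_norm_le (mat2 (phase_error nc \<phi> M x) 0 0 (phase_error nc \<phi> M x) *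
      (if \<forall>l<nc. bit x l then global_phase \<phi> * rz \<alpha> * (y_basis * rz \<theta> * y_basis_adj) * rz \<beta> else 1\<^sub>m 2))
      (if x = 2 ^ nc - 1 then U else 1\<^sub>m 2) e"
    by simp
qed

theorem corollary1:
  fixes U :: "complex mat" and \<epsilon> :: real
  assumes "unitary2 U" and "\<epsilon> > 0"
  shows "\<exists>C::real. \<forall>nc::nat. \<exists>gs. approx_decomp nc U \<epsilon> gs \<and>
           real (cnot_count gs) \<le> C * real (nc + 1)"
proof -
  obtain \<phi> \<alpha> \<theta> \<beta> where U: "U = global_phase \<phi> * rz \<alpha> * (y_basis * rz \<theta> * y_basis_adj) * rz \<beta>"
    using unitary2_euler_decomposition[OF assms(1)] .
  obtain M :: nat where "\<bar>\<phi>\<bar> / \<epsilon> < 2 ^ M"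
    using real_arch_pow[of 2 "\<bar>\<phi>\<bar> / \<epsilon>"] by auto
  then have M: "\<bar>\<phi>\<bar> / 2 ^ M \<le> \<epsilon>"
    using assms(2) by (simp add: field_simps)
  have "approx_decomp nc U \<epsilon> (mcu_gates nc \<phi> \<alpha> \<theta> \<beta> M) \<and>
        real (cnot_count (mcu_gates nc \<phi> \<alpha> \<theta> \<beta> M)) \<le> real (144 + 48 * M) * real (nc + 1)" for nc
  proof
    show "approx_decomp nc U \<epsilon> (mcu_gates nc \<phi> \<alpha> \<theta> \<beta> M)"
      by (rule approx_decomp_mcu_gates[OF assms(1) U M])
    have "cnot_count (mcu_gates nc \<phi> \<alpha> \<theta> \<beta> M) \<le> (144 + 48 * M) * (nc + 1)"
      using cnot_count_mcu_gates[of nc \<phi> \<alpha> \<theta> \<beta> M] by (simp add: algebra_simps)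
    then show "real (cnot_count (mcu_gates nc \<phi> \<alpha> \<theta> \<beta> M)) \<le> real (144 + 48 * M) * real (nc + 1)"
      by (metis of_nat_le_iff of_nat_mult)
  qed
  then show ?thesis
    by blast
qed

end
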